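(* Let $E\subset\mathbb{R}$ be the Cantor set associated with a sequence $(l_j)_{j\ge0}$, and let $\mathrm{Gap}_j:=l_{j-1}-2l_j$ for $j\geq1$. Assume that $\mathrm{Gap}_j<l_j$ for all $j\geq1$ and $\mathrm{Gap}_j<\mathrm{Gap}_{j-1}$ for all $j\geq2$. If $s>0$ and $$\sum_{j\geq2}\frac{\mathrm{Gap}_{j-1}^{2-2s}}{\mathrm{Gap}_j^2}\Big(\sum_{k\geq j}2^k\mathrm{Gap}_k\Big)<\infty,$$ then the characteristic function $\chi_E$ of $E$ belongs to $H^{s,2}(\mathbb{R})$ (and hence $E$ is not $(s,2)$-null). In particular, for the fat Cantor set $G_{\alpha,\beta}$ with $0<\alpha<1/2$ and $0<\beta<1-2\alpha$, $\chi_{G_{\alpha,\beta}}\in H^{s,2}(\mathbb{R})$ for all $s<s_{\alpha,2}$, where $s_{\alpha,2}:=\frac12\big(1+\frac{\log2}{\log\alpha}\big)\in(0,1/2)$.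
   Context: $H^{s,2}(\mathbb{R})$ is the Sobolev space of tempered distributions $u$ with $\int_{\mathbb{R}}(1+|\xi|^2)^s|\hat u(\xi)|^2\,d\xi<\infty$. A set $E\subset\mathbb{R}$ is $(s,2)$-null if no non-zero element of $H^{s,2}(\mathbb{R})$ has (distributional) support contained in $E$. Cantor sets: given $(l_j)_{j\ge0}$ with $l_0=1$ and $0<l_{j+1}<l_j/2$, let $E_0=[0,1]$ and obtain $E_{j+1}$ from $E_j$ by removing an open interval of length $l_j-2l_{j+1}$ from the middle of each of the $2^j$ intervals (of length $l_j$) composing $E_j$; the Cantor set is $E=\bigcap_j E_j$. The fat Cantor set $G_{\alpha,\beta}$ is the Cantor set with $l_{j+1}=\frac12(l_j-\beta\alpha^j)$ for $j\geq0$. *)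

theory Defs
  imports "HOL-Analysis.Analysis"
begin

text \<open>Left endpoints of the 2^j intervals (each of length l j) composing E_j.
  An interval [a, a + l j] is replaced by [a, a + l (j+1)] and
  [a + l j - l (j+1), a + l j], i.e. the open middle interval of length
  l j - 2 l (j+1) is removed.\<close>
primrec cantor_lefts :: "(nat \<Rightarrow> real) \<Rightarrow> nat \<Rightarrow> real set" where
  "cantor_lefts l 0 = {0}"
| "cantor_lefts l (Suc j) =
     (\<Union>a\<in>cantor_lefts l j. {a, a + l j - l (Suc j)})"

definition cantor_level :: "(nat \<Rightarrow> real) \<Rightarrow> nat \<Rightarrow> real set" where
  "cantor_level l j = (\<Union>a\<in>cantor_lefts l j. {a .. a + l j})"

definition cantor_set :: "(nat \<Rightarrow> real) \<Rightarrow> real set" where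
  "cantor_set l = (\<Inter>j. cantor_level l j)"

text \<open>Gap_j = l_{j-1} - 2 l_j (meaningful for j \<ge> 1).\<close>
definition gap :: "(nat \<Rightarrow> real) \<Rightarrow> nat \<Rightarrow> real" where
  "gap l j = l (j - 1) - 2 * l j"

definition fourier :: "(real \<Rightarrow> real) \<Rightarrow> real \<Rightarrow> complex" where
  "fourier f \<xi> = (\<integral>x. complex_of_real (f x) * exp (- (2 * pi * \<i> * complex_of_real (x * \<xi>))) \<partial>lborel)"

definition in_sobolev :: "real \<Rightarrow> (real \<Rightarrow> real) \<Rightarrow> bool" where
  "in_sobolev s f \<longleftrightarrow> integrable lborel f \<and>
     (\<integral>\<^sup>+ \<xi>. ennreal ((1 + \<xi>\<^sup>2) powr s * (cmod (fourier f \<xi>))\<^sup>2) \<partial>lborel) < \<infinity>"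

primrec fat_l :: "real \<Rightarrow> real \<Rightarrow> nat \<Rightarrow> real" where
  "fat_l \<alpha> \<beta> 0 = 1"
| "fat_l \<alpha> \<beta> (Suc j) = (fat_l \<alpha> \<beta> j - \<beta> * \<alpha> ^ j) / 2"

definition s_alpha2 :: "real \<Rightarrow> real" where
  "s_alpha2 \<alpha> = (1 + ln 2 / ln \<alpha>) / 2"

end

theory Submission
  imports Defs "HOL-Probability.Probability"
begin

text \<open>
  Membership of \<open>\<chi>\<^sub>E\<close> in \<open>H\<^sup>s\<close> is controlled by the \<open>L\<^sup>2\<close> moduli of continuity
  \<open>\<parallel>\<chi>\<^sub>E - \<chi>\<^sub>E(\<cdot> - h)\<parallel>\<^sup>2\<close>, whose Fourier transforms are \<open>(2 - 2 cos 2\<pi>h\<xi>) |\<chi>\<^sub>E^(\<xi>)|\<^sup>2\<close>.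
  Choosing for every \<open>|\<xi>| \<ge> 1/4\<close> a dyadic \<open>h = 2\<^sup>-\<^sup>n\<close> with \<open>h|\<xi>| \<in> [1/4, 1/2)\<close> bounds the weight
  \<open>(1 + \<xi>\<^sup>2)\<^sup>s\<close> by \<open>2 + 9 \<cdot> 4\<^sup>s\<^sup>n (2 - 2 cos 2\<pi>h\<xi>)\<close>, so by Plancherel's inequality
  \<open>\<integral>(1 + \<xi>\<^sup>2)\<^sup>s |\<chi>\<^sub>E^|\<^sup>2 \<le> 2\<parallel>\<chi>\<^sub>E\<parallel>\<^sup>2 + \<Sum>\<^sub>n 9 \<cdot> 4\<^sup>s\<^sup>n \<parallel>\<chi>\<^sub>E - \<chi>\<^sub>E(\<cdot> - 2\<^sup>-\<^sup>n)\<parallel>\<^sup>2\<close>.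
  Where \<open>\<chi>\<^sub>E\<close> and its translate by \<open>h\<close> differ, one of the two points lies outside \<open>E\<close> but
  within \<open>h\<close> of \<open>E\<close>: next to the unit interval or to an endpoint of one of the \<open>2\<^sup>k\<close> removed
  gaps of length \<open>Gap\<^sub>k\<^sub>+\<^sub>1\<close>. Hence \<open>\<parallel>\<chi>\<^sub>E - \<chi>\<^sub>E(\<cdot> - h)\<parallel>\<^sup>2 \<le> 2(2h + \<Sum>\<^sub>k 2\<^sup>k min(Gap\<^sub>k\<^sub>+\<^sub>1, 2h))\<close>,
  and summing over \<open>n\<close> leaves a constant times \<open>\<Sum>\<^sub>k 2\<^sup>k Gap\<^sub>k\<^sub>+\<^sub>1\<^sup>1\<^sup>-\<^sup>2\<^sup>s\<close>. Since the gaps decrease,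
  this series is dominated by the one in the hypothesis. For \<open>G\<^sub>\<alpha>\<^sub>,\<^sub>\<beta>\<close> one has
  \<open>Gap\<^sub>k\<^sub>+\<^sub>1 = \<beta>\<alpha>\<^sup>k\<close>, and the series is geometric with ratio \<open>2\<alpha>\<^sup>1\<^sup>-\<^sup>2\<^sup>s < 1\<close> exactly when \<open>s < s\<^sub>\<alpha>\<^sub>,\<^sub>2\<close>.

  Only the inequality half of Plancherel's theorem is needed; it is obtained by damping with a
  Gaussian, whose Fourier transform is again a Gaussian.
\<close>

section \<open>Geometry of the Cantor set\<close>

lemma gap_Suc: "gap l (Suc k) = l k - 2 * l (Suc k)"
  by (simp add: gap_def)

locale cantor_sequence =
  fixes l :: "nat \<Rightarrow> real"
  assumes l_0: "l 0 = 1" and l_Suc: "\<And>j. 0 < l (Suc j) \<and> l (Suc j) < l j / 2"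
begin

lemma l_pos: "0 < l j"
  by (cases j) (use l_0 l_Suc in auto)

lemma l_le_1: "l j \<le> 1"
proof (induction j)
  case (Suc j) then show ?case using l_Suc[of j] l_pos[of j] by linarith
qed (simp add: l_0)

lemma gap_Suc_pos: "0 < gap l (Suc k)"
  using l_Suc[of k] by (simp add: gap_Suc)

lemma gap_Suc_less_1: "gap l (Suc k) < 1"
  using l_le_1[of k] l_pos[of "Suc k"] by (simp add: gap_Suc)

lemma finite_cantor_lefts: "finite (cantor_lefts l j)"
  by (induction j) auto

lemma card_cantor_lefts_le: "card (cantor_lefts l j) \<le> 2 ^ j"
proof (induction j)
  case (Suc j)
  have "card (cantor_lefts l (Suc j)) \<le> (\<Sum>a\<in>cantor_lefts l j. card {a, a + l j - l (Suc j)})"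
    by (simp add: card_UN_le finite_cantor_lefts)
  also have "\<dots> \<le> (\<Sum>a\<in>cantor_lefts l j. 2)"
    by (intro sum_mono) (simp add: card_insert_le_m1)
  also have "\<dots> \<le> 2 ^ Suc j" using Suc by simp
  finally show ?case .
qed simp

lemma cantor_lefts_separated:
  "a \<in> cantor_lefts l j \<Longrightarrow> b \<in> cantor_lefts l j \<Longrightarrow> a < b \<Longrightarrow> a + l j < b"
proof (induction j arbitrary: a b)
  case (Suc j)
  from Suc.prems obtain c where c: "c \<in> cantor_lefts l j" "a = c \<or> a = c + l j - l (Suc j)"
    by auto
  from Suc.prems obtain d where d: "d \<in> cantor_lefts l j" "b = d \<or> b = d + l j - l (Suc j)"
    by auto
  have l: "0 < l (Suc j)" "2 * l (Suc j) < l j" using l_Suc[of j] by auto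
  consider "c = d" | "c < d" | "d < c" by linarith
  then show ?case
  proof cases
    case 1 then show ?thesis using c(2) d(2) l Suc.prems(3) by auto
  next
    case 2 then have "c + l j < d" using Suc.IH c(1) d(1) by blast
    then show ?thesis using c(2) d(2) l by auto
  next
    case 3 then have "d + l j < c" using Suc.IH c(1) d(1) by blast
    then show ?thesis using c(2) d(2) l Suc.prems(3) by auto
  qed
qed simp

lemma cantor_level_0: "cantor_level l 0 = {0..1}"
  using l_0 by (simp add: cantor_level_def)

lemma cantor_set_subset: "cantor_set l \<subseteq> {0..1}"
  unfolding cantor_set_def using cantor_level_0 by blast

lemma closed_cantor_level: "closed (cantor_level l j)"
  unfolding cantor_level_def by (intro closed_UN finite_cantor_lefts) auto

lemma closed_cantor_set: "closed (cantor_set l)"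
  unfolding cantor_set_def using closed_cantor_level by blast

lemma cantor_set_borel[measurable]: "cantor_set l \<in> sets borel"
  using closed_cantor_set by (simp add: borel_closed)

lemma not_in_cantor_set_cases:
  assumes "y \<notin> cantor_set l"
  obtains "y < 0" | "1 < y"
  | k a where "a \<in> cantor_lefts l k" "a + l (Suc k) < y" "y < a + l k - l (Suc k)"
proof -
  have "y \<in> cantor_level l j"
    if "0 \<le> y" "y \<le> 1"
      and no_gap: "\<And>k a. a \<in> cantor_lefts l k \<Longrightarrow> \<not> (a + l (Suc k) < y \<and> y < a + l k - l (Suc k))"
    for j
  proof (induction j)
    case 0 then show ?case using that cantor_level_0 by simp
  next
    case (Suc k)
    then obtain a where "a \<in> cantor_lefts l k" "y \<in> {a..a + l k}"
      unfolding cantor_level_def by blast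
    then have a: "a \<in> cantor_lefts l k" "a \<le> y" "y \<le> a + l k" by auto
    have lefts: "a \<in> cantor_lefts l (Suc k)" "a + l k - l (Suc k) \<in> cantor_lefts l (Suc k)"
      using a(1) by auto
    show ?case
    proof (cases "y \<le> a + l (Suc k)")
      case True
      then have "y \<in> {a..a + l (Suc k)}" using a by simp
      then show ?thesis using lefts(1) unfolding cantor_level_def by blast
    next
      case False
      then have "y \<in> {a + l k - l (Suc k)..(a + l k - l (Suc k)) + l (Suc k)}"
        using a no_gap[OF a(1)] by simp
      then show ?thesis using lefts(2) unfolding cantor_level_def by blast
    qed
  qed
  note in_levels = this
  show ?thesis
  proof (rule ccontr)
    assume "\<not> thesis"
    then have "0 \<le> y" "y \<le> 1"
      "\<And>k a. a \<in> cantor_lefts l k \<Longrightarrow> \<not> (a + l (Suc k) < y \<and> y < a + l k - l (Suc k))"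
      using that by force+
    then have "y \<in> cantor_set l" using in_levels unfolding cantor_set_def by blast
    then show False using assms by contradiction
  qed
qed

lemma cantor_set_avoids_gap_interior:
  assumes a: "a \<in> cantor_lefts l k" and x: "x \<in> cantor_set l"
  shows "x \<le> a + l (Suc k) \<or> a + l k - l (Suc k) \<le> x"
proof -
  have "x \<in> cantor_level l (Suc k)" using x unfolding cantor_set_def by auto
  then obtain b where "b \<in> cantor_lefts l (Suc k)" "x \<in> {b..b + l (Suc k)}"
    unfolding cantor_level_def by blast
  then have b: "b \<in> cantor_lefts l (Suc k)" "b \<le> x" "x \<le> b + l (Suc k)" by auto
  then obtain c where c: "c \<in> cantor_lefts l k" "b = c \<or> b = c + l k - l (Suc k)" by auto
  have l: "0 < l (Suc k)" "2 * l (Suc k) < l k" using l_Suc[of k] by auto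
  consider "c = a" | "c < a" | "a < c" by linarith
  then show ?thesis
  proof cases
    case 1 then show ?thesis using b c(2) by auto
  next
    case 2 then have "c + l k < a" using cantor_lefts_separated c(1) a by blast
    then show ?thesis using b c(2) l by auto
  next
    case 3 then have "a + l k < c" using cantor_lefts_separated c(1) a by blast
    then show ?thesis using b c(2) l by auto
  qed
qed

text \<open>An explicit union of intervals containing every point outside \<open>E\<close> within distance
  \<open>h\<close> of \<open>E\<close>, chosen so that its measure is easy to bound.\<close>

definition gap_collar :: "real \<Rightarrow> nat \<Rightarrow> real \<Rightarrow> real set" where
  "gap_collar a k h = {a + l (Suc k) <..< a + l k - l (Suc k)} \<inter>
     ({..a + l (Suc k) + h} \<union> {a + l k - l (Suc k) - h..})"

definition collar :: "real \<Rightarrow> real set" where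
  "collar h = {-h..<0} \<union> {1<..1 + h} \<union> (\<Union>k. \<Union>a\<in>cantor_lefts l k. gap_collar a k h)"

lemma gap_collar_borel[measurable]: "gap_collar a k h \<in> sets borel"
  unfolding gap_collar_def by measurable

lemma gap_collars_borel[measurable]: "(\<Union>a\<in>cantor_lefts l k. gap_collar a k h) \<in> sets borel"
  by (rule sets.finite_UN[OF finite_cantor_lefts]) simp

lemma collar_borel[measurable]: "collar h \<in> sets borel"
  unfolding collar_def by (intro sets.Un sets.countable_UN gap_collars_borel) auto

lemma in_collar_if_near_cantor_set:
  assumes y: "y \<notin> cantor_set l" and x: "x \<in> cantor_set l" and xy: "\<bar>x - y\<bar> \<le> h"
  shows "y \<in> collar h"
proof -
  have x01: "0 \<le> x" "x \<le> 1" using x cantor_set_subset by auto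
  have h: "y \<le> x + h" "x - h \<le> y" using xy by (auto simp: abs_le_iff)
  from not_in_cantor_set_cases[OF y] show ?thesis
  proof cases
    case 1 then have "y \<in> {-h..<0}" using x01 h by simp
    then show ?thesis unfolding collar_def by blast
  next
    case 2 then have "y \<in> {1<..1 + h}" using x01 h by simp
    then show ?thesis unfolding collar_def by blast
  next
    case (3 k a)
    have "x \<le> a + l (Suc k) \<or> a + l k - l (Suc k) \<le> x"
      by (rule cantor_set_avoids_gap_interior[OF 3(1) x])
    then have "y \<in> gap_collar a k h" using 3 h unfolding gap_collar_def by auto
    then show ?thesis using 3(1) unfolding collar_def by blast
  qed
qed

lemma emeasure_gap_collar:
  assumes "0 \<le> h"
  shows "emeasure lborel (gap_collar a k h) \<le> ennreal (min (gap l (Suc k)) (2 * h))"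
proof -
  have "emeasure lborel (gap_collar a k h)
      \<le> emeasure lborel {a + l (Suc k) <..< a + l k - l (Suc k)}"
    by (intro emeasure_mono) (auto simp: gap_collar_def)
  also have "\<dots> = ennreal (gap l (Suc k))" using l_Suc[of k] by (simp add: gap_Suc)
  finally have gap: "emeasure lborel (gap_collar a k h) \<le> ennreal (gap l (Suc k))" .
  have "emeasure lborel (gap_collar a k h)
      \<le> emeasure lborel ({a + l (Suc k) .. a + l (Suc k) + h}
                         \<union> {a + l k - l (Suc k) - h .. a + l k - l (Suc k)})"
    by (intro emeasure_mono) (auto simp: gap_collar_def)
  also have "\<dots> \<le> emeasure lborel {a + l (Suc k) .. a + l (Suc k) + h}
                 + emeasure lborel {a + l k - l (Suc k) - h .. a + l k - l (Suc k)}"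
    by (intro emeasure_subadditive) auto
  also have "\<dots> = ennreal (2 * h)" using assms by (simp add: ennreal_plus[symmetric])
  finally show ?thesis using gap by (simp add: min_def)
qed

lemma emeasure_collar:
  assumes h: "0 \<le> h"
  shows "emeasure lborel (collar h)
    \<le> ennreal (2 * h) + (\<Sum>k. ennreal (2 ^ k * min (gap l (Suc k)) (2 * h)))"
proof -
  have level: "emeasure lborel (\<Union>a\<in>cantor_lefts l k. gap_collar a k h)
      \<le> ennreal (2 ^ k * min (gap l (Suc k)) (2 * h))" for k
  proof -
    have "emeasure lborel (\<Union>a\<in>cantor_lefts l k. gap_collar a k h)
        \<le> (\<Sum>a\<in>cantor_lefts l k. emeasure lborel (gap_collar a k h))"
      by (intro emeasure_subadditive_finite finite_cantor_lefts) auto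
    also have "\<dots> \<le> (\<Sum>a\<in>cantor_lefts l k. ennreal (min (gap l (Suc k)) (2 * h)))"
      by (intro sum_mono emeasure_gap_collar h)
    also have "\<dots> = of_nat (card (cantor_lefts l k)) * ennreal (min (gap l (Suc k)) (2 * h))"
      by simp
    also have "\<dots> \<le> of_nat (2 ^ k) * ennreal (min (gap l (Suc k)) (2 * h))"
      by (intro mult_right_mono of_nat_le_iff[THEN iffD2, OF card_cantor_lefts_le]) simp
    also have "\<dots> = ennreal (2 ^ k * min (gap l (Suc k)) (2 * h))"
      by (simp add: ennreal_mult' ennreal_of_nat_eq_real_of_nat)
    finally show ?thesis .
  qed
  have "emeasure lborel (collar h) \<le> emeasure lborel {-h..<0} + emeasure lborel {1<..1 + h}
      + emeasure lborel (\<Union>k. \<Union>a\<in>cantor_lefts l k. gap_collar a k h)"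
    unfolding collar_def
    by (intro order_trans[OF emeasure_subadditive] add_mono emeasure_subadditive) auto
  also have "emeasure lborel {-h..<0} + emeasure lborel {1<..1 + h} = ennreal (2 * h)"
    using h by (simp add: ennreal_plus[symmetric])
  also have "emeasure lborel (\<Union>k. \<Union>a\<in>cantor_lefts l k. gap_collar a k h)
      \<le> (\<Sum>k. emeasure lborel (\<Union>a\<in>cantor_lefts l k. gap_collar a k h))"
    by (intro emeasure_subadditive_countably) auto
  also have "\<dots> \<le> (\<Sum>k. ennreal (2 ^ k * min (gap l (Suc k)) (2 * h)))"
    by (intro suminf_le level) auto
  finally show ?thesis by (simp add: add_mono)
qed

end


section \<open>Fourier transforms of real integrable functions\<close>

definition fourier_cos :: "(real \<Rightarrow> real) \<Rightarrow> real \<Rightarrow> real" where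
  "fourier_cos g \<xi> = (\<integral>x. g x * cos (2 * pi * x * \<xi>) \<partial>lborel)"

definition fourier_sin :: "(real \<Rightarrow> real) \<Rightarrow> real \<Rightarrow> real" where
  "fourier_sin g \<xi> = (\<integral>x. g x * sin (2 * pi * x * \<xi>) \<partial>lborel)"

definition power_spectrum :: "(real \<Rightarrow> real) \<Rightarrow> real \<Rightarrow> real" where
  "power_spectrum g \<xi> = (fourier_cos g \<xi>)\<^sup>2 + (fourier_sin g \<xi>)\<^sup>2"

lemma fourier_cos_measurable[measurable]:
  assumes [measurable]: "g \<in> borel_measurable borel"
  shows "fourier_cos g \<in> borel_measurable borel"
  unfolding fourier_cos_def by measurable

lemma fourier_sin_measurable[measurable]:
  assumes [measurable]: "g \<in> borel_measurable borel"
  shows "fourier_sin g \<in> borel_measurable borel"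
  unfolding fourier_sin_def by measurable

lemma power_spectrum_measurable[measurable]:
  assumes [measurable]: "g \<in> borel_measurable borel"
  shows "power_spectrum g \<in> borel_measurable borel"
  unfolding power_spectrum_def by measurable

lemma power_spectrum_nonneg: "0 \<le> power_spectrum g \<xi>"
  by (simp add: power_spectrum_def)

lemma integrable_mult_bounded:
  fixes g c :: "real \<Rightarrow> real"
  assumes "integrable lborel g" "c \<in> borel_measurable borel" "\<And>x. \<bar>c x\<bar> \<le> 1"
  shows "integrable lborel (\<lambda>x. g x * c x)"
proof (rule Bochner_Integration.integrable_bound[OF assms(1)])
  show "(\<lambda>x. g x * c x) \<in> borel_measurable lborel"
    using assms borel_measurable_integrable by (simp add: borel_measurable_times)
  show "AE x in lborel. norm (g x * c x) \<le> norm (g x)"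
    using assms(3) by (auto simp: abs_mult intro!: mult_left_le)
qed

lemma integrable_mult_cos:
  "integrable lborel g \<Longrightarrow> integrable lborel (\<lambda>x. g x * cos (2 * pi * x * \<xi>))"
  by (rule integrable_mult_bounded) auto

lemma integrable_mult_sin:
  "integrable lborel g \<Longrightarrow> integrable lborel (\<lambda>x. g x * sin (2 * pi * x * \<xi>))"
  by (rule integrable_mult_bounded) auto

lemma abs_fourier_cos_le:
  assumes "integrable lborel g"
  shows "\<bar>fourier_cos g \<xi>\<bar> \<le> (\<integral>x. \<bar>g x\<bar> \<partial>lborel)"
proof -
  have "\<bar>fourier_cos g \<xi>\<bar> \<le> (\<integral>x. \<bar>g x * cos (2 * pi * x * \<xi>)\<bar> \<partial>lborel)"
    unfolding fourier_cos_def by (rule integral_abs_bound)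
  also have "\<dots> \<le> (\<integral>x. \<bar>g x\<bar> \<partial>lborel)"
    using assms integrable_abs[OF integrable_mult_cos[OF assms]]
    by (intro integral_mono) (auto simp: abs_mult intro: mult_left_le)
  finally show ?thesis .
qed

lemma abs_fourier_sin_le:
  assumes "integrable lborel g"
  shows "\<bar>fourier_sin g \<xi>\<bar> \<le> (\<integral>x. \<bar>g x\<bar> \<partial>lborel)"
proof -
  have "\<bar>fourier_sin g \<xi>\<bar> \<le> (\<integral>x. \<bar>g x * sin (2 * pi * x * \<xi>)\<bar> \<partial>lborel)"
    unfolding fourier_sin_def by (rule integral_abs_bound)
  also have "\<dots> \<le> (\<integral>x. \<bar>g x\<bar> \<partial>lborel)"
    using assms integrable_abs[OF integrable_mult_sin[OF assms]]
    by (intro integral_mono) (auto simp: abs_mult intro: mult_left_le)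
  finally show ?thesis .
qed

lemma power_spectrum_le:
  assumes "integrable lborel g"
  shows "power_spectrum g \<xi> \<le> 2 * (\<integral>x. \<bar>g x\<bar> \<partial>lborel)\<^sup>2"
proof -
  have "0 \<le> (\<integral>x. \<bar>g x\<bar> \<partial>lborel)" by simp
  then have "(fourier_cos g \<xi>)\<^sup>2 \<le> (\<integral>x. \<bar>g x\<bar> \<partial>lborel)\<^sup>2"
    and "(fourier_sin g \<xi>)\<^sup>2 \<le> (\<integral>x. \<bar>g x\<bar> \<partial>lborel)\<^sup>2"
    using abs_fourier_cos_le[OF assms] abs_fourier_sin_le[OF assms]
    by (metis abs_le_square_iff abs_of_nonneg)+
  then show ?thesis by (simp add: power_spectrum_def)
qed

lemma cmod_fourier_squared:
  assumes g: "integrable lborel g"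
  shows "(cmod (fourier g \<xi>))\<^sup>2 = power_spectrum g \<xi>"
proof -
  have eq: "(\<lambda>x. complex_of_real (g x) * exp (- (2 * pi * \<i> * complex_of_real (x * \<xi>))))
     = (\<lambda>x. complex_of_real (g x * cos (2 * pi * x * \<xi>))
            - \<i> * complex_of_real (g x * sin (2 * pi * x * \<xi>)))"
  proof
    fix x
    have exp: "exp (- (2 * pi * \<i> * complex_of_real (x * \<xi>)))
        = complex_of_real (cos (2 * pi * x * \<xi>)) - \<i> * complex_of_real (sin (2 * pi * x * \<xi>))"
      by (rule complex_eqI) (simp_all add: Re_exp Im_exp mult.assoc)
    show "complex_of_real (g x) * exp (- (2 * pi * \<i> * complex_of_real (x * \<xi>)))
        = complex_of_real (g x * cos (2 * pi * x * \<xi>))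
          - \<i> * complex_of_real (g x * sin (2 * pi * x * \<xi>))"
      unfolding exp by (simp add: algebra_simps)
  qed
  have "integrable lborel (\<lambda>x. complex_of_real (g x * cos (2 * pi * x * \<xi>)))"
    by (rule integrable_bounded_linear[OF bounded_linear_of_real integrable_mult_cos[OF g]])
  moreover have "integrable lborel (\<lambda>x. \<i> * complex_of_real (g x * sin (2 * pi * x * \<xi>)))"
    by (intro integrable_mult_right
        integrable_bounded_linear[OF bounded_linear_of_real integrable_mult_sin[OF g]])
  ultimately have "fourier g \<xi>
      = complex_of_real (fourier_cos g \<xi>) - \<i> * complex_of_real (fourier_sin g \<xi>)"
    unfolding fourier_def eq fourier_cos_def fourier_sin_def
    by (subst Bochner_Integration.integral_diff) (simp_all del: of_real_mult)
  then show ?thesis by (simp add: cmod_power2 power_spectrum_def)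
qed

lemma fourier_cos_shift:
  assumes g: "integrable lborel g"
  shows "fourier_cos (\<lambda>x. g (x - h)) \<xi>
    = cos (2 * pi * h * \<xi>) * fourier_cos g \<xi> - sin (2 * pi * h * \<xi>) * fourier_sin g \<xi>"
proof -
  have "fourier_cos (\<lambda>x. g (x - h)) \<xi>
      = \<bar>1\<bar> *\<^sub>R (\<integral>x. g (h + 1 * x - h) * cos (2 * pi * (h + 1 * x) * \<xi>) \<partial>lborel)"
    unfolding fourier_cos_def
    by (rule lborel_integral_real_affine[where f="\<lambda>x. g (x - h) * cos (2 * pi * x * \<xi>)"]) simp
  also have "\<dots> = (\<integral>x. cos (2 * pi * h * \<xi>) * (g x * cos (2 * pi * x * \<xi>))
                     - sin (2 * pi * h * \<xi>) * (g x * sin (2 * pi * x * \<xi>)) \<partial>lborel)"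
    by (simp, intro Bochner_Integration.integral_cong)
       (auto simp: distrib_left distrib_right cos_add algebra_simps)
  also have "\<dots> = cos (2 * pi * h * \<xi>) * fourier_cos g \<xi> - sin (2 * pi * h * \<xi>) * fourier_sin g \<xi>"
    unfolding fourier_cos_def fourier_sin_def
    using integrable_mult_cos[OF g] integrable_mult_sin[OF g] by simp
  finally show ?thesis .
qed

lemma fourier_sin_shift:
  assumes g: "integrable lborel g"
  shows "fourier_sin (\<lambda>x. g (x - h)) \<xi>
    = sin (2 * pi * h * \<xi>) * fourier_cos g \<xi> + cos (2 * pi * h * \<xi>) * fourier_sin g \<xi>"
proof -
  have "fourier_sin (\<lambda>x. g (x - h)) \<xi>
      = \<bar>1\<bar> *\<^sub>R (\<integral>x. g (h + 1 * x - h) * sin (2 * pi * (h + 1 * x) * \<xi>) \<partial>lborel)"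
    unfolding fourier_sin_def
    by (rule lborel_integral_real_affine[where f="\<lambda>x. g (x - h) * sin (2 * pi * x * \<xi>)"]) simp
  also have "\<dots> = (\<integral>x. sin (2 * pi * h * \<xi>) * (g x * cos (2 * pi * x * \<xi>))
                     + cos (2 * pi * h * \<xi>) * (g x * sin (2 * pi * x * \<xi>)) \<partial>lborel)"
    by (simp, intro Bochner_Integration.integral_cong)
       (auto simp: distrib_left distrib_right sin_add algebra_simps)
  also have "\<dots> = sin (2 * pi * h * \<xi>) * fourier_cos g \<xi> + cos (2 * pi * h * \<xi>) * fourier_sin g \<xi>"
    unfolding fourier_cos_def fourier_sin_def
    using integrable_mult_cos[OF g] integrable_mult_sin[OF g] by simp
  finally show ?thesis .
qed

lemma power_spectrum_shift_diff:
  assumes g: "integrable lborel g"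
  shows "power_spectrum (\<lambda>x. g x - g (x - h)) \<xi>
    = (2 - 2 * cos (2 * pi * h * \<xi>)) * power_spectrum g \<xi>"
proof -
  have gh: "integrable lborel (\<lambda>x. g (x - h))"
    using lborel_integrable_real_affine[OF g, of 1 "-h"] by simp
  have "fourier_cos (\<lambda>x. g x - g (x - h)) \<xi> = fourier_cos g \<xi> - fourier_cos (\<lambda>x. g (x - h)) \<xi>"
    unfolding fourier_cos_def left_diff_distrib
    by (rule Bochner_Integration.integral_diff[OF integrable_mult_cos[OF g] integrable_mult_cos[OF gh]])
  moreover have "fourier_sin (\<lambda>x. g x - g (x - h)) \<xi> = fourier_sin g \<xi> - fourier_sin (\<lambda>x. g (x - h)) \<xi>"
    unfolding fourier_sin_def left_diff_distrib
    by (rule Bochner_Integration.integral_diff[OF integrable_mult_sin[OF g] integrable_mult_sin[OF gh]])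
  moreover
  define C S where "C = cos (2 * pi * h * \<xi>)" and "S = sin (2 * pi * h * \<xi>)"
  have "(a - (C * a - S * b))\<^sup>2 + (b - (S * a + C * b))\<^sup>2
      = (1 - 2 * C + (S\<^sup>2 + C\<^sup>2)) * (a\<^sup>2 + b\<^sup>2)" for a b :: real
    by (simp add: power2_eq_square algebra_simps)
  moreover have "S\<^sup>2 + C\<^sup>2 = 1" unfolding C_def S_def by simp
  ultimately show ?thesis
    unfolding power_spectrum_def fourier_cos_shift[OF g] fourier_sin_shift[OF g]
      C_def[symmetric] S_def[symmetric]
    by simp
qed

lemma integrable_lborel_product:
  fixes a b :: "real \<Rightarrow> real"
  assumes a: "integrable lborel a" and b: "integrable lborel b"
  shows "integrable (lborel \<Otimes>\<^sub>M lborel) (\<lambda>(x, y). a x * b y)"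
proof (rule lborel_pair.Fubini_integrable)
  have [measurable]: "a \<in> borel_measurable borel" "b \<in> borel_measurable borel"
    using a b by (auto simp: borel_measurable_integrable)
  show "(\<lambda>(x, y). a x * b y) \<in> borel_measurable (lborel \<Otimes>\<^sub>M lborel)" by measurable
  have "(\<lambda>x. \<integral>y. norm (case (x, y) of (x, y) \<Rightarrow> a x * b y) \<partial>lborel)
      = (\<lambda>x. \<bar>a x\<bar> * (\<integral>y. \<bar>b y\<bar> \<partial>lborel))"
    by (simp add: abs_mult)
  then show "integrable lborel (\<lambda>x. \<integral>y. norm (case (x, y) of (x, y) \<Rightarrow> a x * b y) \<partial>lborel)"
    using a by simp
  show "AE x in lborel. integrable lborel (\<lambda>y. case (x, y) of (x, y) \<Rightarrow> a x * b y)"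
    using b by simp
qed


section \<open>Plancherel's inequality\<close>

lemma integral_std_normal_density_cos:
  "(\<integral>u. std_normal_density u * cos (a * u) \<partial>lborel) = exp (- (a\<^sup>2) / 2)"
proof -
  have int: "integrable lborel (\<lambda>x. std_normal_density x *\<^sub>R iexp (a * x))"
    by (rule Bochner_Integration.integrable_bound[OF integrable_normal_density[of 1 0]])
       (auto simp: norm_mult)
  have "complex_of_real (exp (- (a\<^sup>2) / 2)) = char std_normal_distribution a"
    by (simp add: char_std_normal_distribution)
  also have "\<dots> = (\<integral>x. std_normal_density x *\<^sub>R iexp (a * x) \<partial>lborel)"
    unfolding char_def by (subst integral_density) auto
  finally have "exp (- (a\<^sup>2) / 2) = Re (\<integral>x. std_normal_density x *\<^sub>R iexp (a * x) \<partial>lborel)"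
    by (metis Re_complex_of_real)
  also have "\<dots> = (\<integral>x. Re (std_normal_density x *\<^sub>R iexp (a * x)) \<partial>lborel)"
    by (rule integral_Re[OF int, symmetric])
  also have "\<dots> = (\<integral>x. std_normal_density x * cos (a * x) \<partial>lborel)"
    by (intro Bochner_Integration.integral_cong) (auto simp: Re_exp)
  finally show ?thesis ..
qed

text \<open>The Gaussian damping factor of width \<open>\<sigma>\<close> in frequency and its Fourier transform, a
  centred normal density of standard deviation \<open>1/(2\<pi>\<sigma>)\<close>.\<close>

definition gauss_weight :: "real \<Rightarrow> real \<Rightarrow> real" where
  "gauss_weight \<sigma> \<xi> = exp (- ((\<xi> / \<sigma>)\<^sup>2 / 2))"

definition gauss_kernel :: "real \<Rightarrow> real \<Rightarrow> real" where
  "gauss_kernel \<sigma> = normal_density 0 (1 / (2 * pi * \<sigma>))"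

lemma gauss_weight_measurable[measurable]: "gauss_weight \<sigma> \<in> borel_measurable borel"
  unfolding gauss_weight_def by measurable

lemma gauss_weight_nonneg: "0 \<le> gauss_weight \<sigma> \<xi>"
  by (simp add: gauss_weight_def)

lemma integrable_gauss_weight: "0 < \<sigma> \<Longrightarrow> integrable lborel (gauss_weight \<sigma>)"
proof -
  assume "0 < \<sigma>"
  moreover have "gauss_weight \<sigma> = (\<lambda>x. sqrt (2 * pi * \<sigma>\<^sup>2) * normal_density 0 \<sigma> x)"
    using \<open>0 < \<sigma>\<close> by (auto simp: fun_eq_iff gauss_weight_def normal_density_def power_divide)
  ultimately show ?thesis by (simp add: integrable_normal_density)
qed

lemma gauss_weight_mono: "0 < a \<Longrightarrow> a \<le> b \<Longrightarrow> gauss_weight a \<xi> \<le> gauss_weight b \<xi>"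
proof -
  assume ab: "0 < a" "a \<le> b"
  have "\<bar>\<xi> / b\<bar> \<le> \<bar>\<xi> / a\<bar>" using ab by (simp add: abs_divide divide_left_mono)
  then have "\<bar>\<xi> / b\<bar>\<^sup>2 \<le> \<bar>\<xi> / a\<bar>\<^sup>2" by (rule power_mono) simp
  then have "(\<xi> / b)\<^sup>2 \<le> (\<xi> / a)\<^sup>2" by (simp only: power2_abs)
  then show ?thesis by (simp add: gauss_weight_def)
qed

lemma gauss_weight_tendsto_1: "(\<lambda>n. gauss_weight (Suc n) \<xi>) \<longlonglongrightarrow> 1"
proof -
  have "(\<lambda>n. \<xi> / real (Suc n)) \<longlonglongrightarrow> 0"
    using LIMSEQ_Suc[OF lim_const_over_n[of \<xi>]] by simp
  then have "(\<lambda>n. gauss_weight (Suc n) \<xi>) \<longlonglongrightarrow> exp (- ((0::real)\<^sup>2 / 2))"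
    unfolding gauss_weight_def by (intro tendsto_intros) auto
  then show ?thesis by simp
qed

lemma integral_gauss_weight_cos:
  assumes "0 < \<sigma>"
  shows "(\<integral>\<xi>. gauss_weight \<sigma> \<xi> * cos (2 * pi * t * \<xi>) \<partial>lborel) = gauss_kernel \<sigma> t"
proof -
  have "(\<integral>\<xi>. gauss_weight \<sigma> \<xi> * cos (2 * pi * t * \<xi>) \<partial>lborel)
      = \<bar>\<sigma>\<bar> *\<^sub>R (\<integral>u. gauss_weight \<sigma> (0 + \<sigma> * u) * cos (2 * pi * t * (0 + \<sigma> * u)) \<partial>lborel)"
    using assms by (intro lborel_integral_real_affine) simp
  also have "(\<lambda>u. gauss_weight \<sigma> (0 + \<sigma> * u) * cos (2 * pi * t * (0 + \<sigma> * u)))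
      = (\<lambda>u. sqrt (2 * pi) * (std_normal_density u * cos ((2 * pi * t * \<sigma>) * u)))"
    using assms
    by (auto simp: fun_eq_iff gauss_weight_def std_normal_density_def power_divide mult_ac)
  also have "(\<integral>u. sqrt (2 * pi) * (std_normal_density u * cos ((2 * pi * t * \<sigma>) * u)) \<partial>lborel)
      = sqrt (2 * pi) * exp (- ((2 * pi * t * \<sigma>)\<^sup>2) / 2)"
    by (simp add: integral_std_normal_density_cos)
  also have "\<bar>\<sigma>\<bar> *\<^sub>R (sqrt (2 * pi) * exp (- ((2 * pi * t * \<sigma>)\<^sup>2) / 2)) = gauss_kernel \<sigma> t"
  proof -
    have "sqrt (2 * pi * (1 / (2 * pi * \<sigma>))\<^sup>2) = 1 / (sqrt (2 * pi) * \<sigma>)"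
      using assms by (simp add: real_sqrt_mult real_sqrt_divide power_divide field_simps)
    moreover have "sqrt (2 * pi) * sqrt (2 * pi) = 2 * pi" by simp
    ultimately show ?thesis
      using assms unfolding gauss_kernel_def normal_density_def
      by (simp add: field_simps power_mult_distrib del: power_divide)
  qed
  finally show ?thesis .
qed

lemma gauss_kernel_measurable[measurable]: "gauss_kernel \<sigma> \<in> borel_measurable borel"
  unfolding gauss_kernel_def normal_density_def by measurable

lemma gauss_kernel_nonneg: "0 \<le> gauss_kernel \<sigma> t"
  by (simp add: gauss_kernel_def)

lemma gauss_kernel_diff:
  "gauss_kernel \<sigma> (x - y) = normal_density x (1 / (2 * pi * \<sigma>)) y"
  "gauss_kernel \<sigma> (x - y) = normal_density y (1 / (2 * pi * \<sigma>)) x"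
  by (simp_all add: gauss_kernel_def normal_density_def power2_commute)

lemma
  assumes "0 < \<sigma>"
  shows integrable_gauss_kernel_diff_left: "integrable lborel (\<lambda>x. gauss_kernel \<sigma> (x - y))"
    and integrable_gauss_kernel_diff_right: "integrable lborel (\<lambda>y. gauss_kernel \<sigma> (x - y))"
    and integral_gauss_kernel_diff_left: "(\<integral>x. gauss_kernel \<sigma> (x - y) \<partial>lborel) = 1"
    and integral_gauss_kernel_diff_right: "(\<integral>y. gauss_kernel \<sigma> (x - y) \<partial>lborel) = 1"
  using assms
  by (simp_all add: gauss_kernel_diff(1)[of \<sigma> x] gauss_kernel_diff(2)[of \<sigma> _ y]
      integrable_normal_density)


locale unit_bounded_integrable =
  fixes g :: "real \<Rightarrow> real"
  assumes g_integrable: "integrable lborel g" and g_bounded: "\<And>x. \<bar>g x\<bar> \<le> 1"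
begin

lemma g_measurable[measurable]: "g \<in> borel_measurable borel"
  using g_integrable by (simp add: borel_measurable_integrable)

lemma integrable_square: "integrable lborel (\<lambda>x. (g x)\<^sup>2)"
proof (rule Bochner_Integration.integrable_bound[OF g_integrable])
  show "(\<lambda>x. (g x)\<^sup>2) \<in> borel_measurable lborel" by measurable
  show "AE x in lborel. norm ((g x)\<^sup>2) \<le> norm (g x)"
  proof (rule AE_I2)
    fix x
    have "\<bar>g x\<bar> * \<bar>g x\<bar> \<le> \<bar>g x\<bar>" by (rule mult_right_le_one_le) (auto simp: g_bounded)
    then show "norm ((g x)\<^sup>2) \<le> norm (g x)" by (simp add: power2_eq_square abs_mult)
  qed
qed

lemma power_spectrum_eq_integral:
  "power_spectrum g \<xi> = (\<integral>x. g x * (cos (2 * pi * x * \<xi>) * fourier_cos g \<xi>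
                                        + sin (2 * pi * x * \<xi>) * fourier_sin g \<xi>) \<partial>lborel)"
proof -
  have "(\<lambda>x. g x * (cos (2 * pi * x * \<xi>) * fourier_cos g \<xi> + sin (2 * pi * x * \<xi>) * fourier_sin g \<xi>))
     = (\<lambda>x. (g x * cos (2 * pi * x * \<xi>)) * fourier_cos g \<xi>
            + (g x * sin (2 * pi * x * \<xi>)) * fourier_sin g \<xi>)"
    by (auto simp: algebra_simps)
  then show ?thesis
    using integrable_mult_cos[OF g_integrable, of \<xi>] integrable_mult_sin[OF g_integrable, of \<xi>]
    by (simp add: power_spectrum_def fourier_cos_def[of g \<xi>] fourier_sin_def[of g \<xi>]
        power2_eq_square)
qed

lemma fourier_rotation_eq_integral:
  "cos (2 * pi * x * \<xi>) * fourier_cos g \<xi> + sin (2 * pi * x * \<xi>) * fourier_sin g \<xi>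
   = (\<integral>y. g y * cos (2 * pi * (x - y) * \<xi>) \<partial>lborel)"
proof -
  have "(\<lambda>y. g y * cos (2 * pi * (x - y) * \<xi>))
     = (\<lambda>y. cos (2 * pi * x * \<xi>) * (g y * cos (2 * pi * y * \<xi>))
            + sin (2 * pi * x * \<xi>) * (g y * sin (2 * pi * y * \<xi>)))"
  proof
    fix y
    have "cos (2 * pi * (x - y) * \<xi>) = cos (2 * pi * x * \<xi> - 2 * pi * y * \<xi>)"
      by (simp add: algebra_simps)
    then show "g y * cos (2 * pi * (x - y) * \<xi>)
        = cos (2 * pi * x * \<xi>) * (g y * cos (2 * pi * y * \<xi>))
          + sin (2 * pi * x * \<xi>) * (g y * sin (2 * pi * y * \<xi>))"
      by (simp add: cos_diff algebra_simps)
  qed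
  then show ?thesis
    using integrable_mult_cos[OF g_integrable, of \<xi>] integrable_mult_sin[OF g_integrable, of \<xi>]
    by (simp add: fourier_cos_def fourier_sin_def)
qed

lemma integral_gauss_weight_convolution_cos:
  assumes \<sigma>: "0 < \<sigma>"
  shows "(\<integral>\<xi>. gauss_weight \<sigma> \<xi> * (\<integral>y. g y * cos (2 * pi * (x - y) * \<xi>) \<partial>lborel) \<partial>lborel)
    = (\<integral>y. g y * gauss_kernel \<sigma> (x - y) \<partial>lborel)"
proof -
  define G where "G = (\<lambda>y \<xi>. gauss_weight \<sigma> \<xi> * (g y * cos (2 * pi * (x - y) * \<xi>)))"
  have G_measurable: "(\<lambda>(y, \<xi>). G y \<xi>) \<in> borel_measurable (lborel \<Otimes>\<^sub>M lborel)"
    unfolding G_def by measurable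
  have dominant: "integrable (lborel \<Otimes>\<^sub>M lborel) (\<lambda>(y, \<xi>). \<bar>g y\<bar> * gauss_weight \<sigma> \<xi>)"
    by (rule integrable_lborel_product) (use g_integrable integrable_gauss_weight[OF \<sigma>] in auto)
  have bound: "\<bar>G y \<xi>\<bar> \<le> \<bar>g y\<bar> * gauss_weight \<sigma> \<xi>" for y \<xi>
  proof -
    have "\<bar>g y\<bar> * \<bar>cos (2 * pi * (x - y) * \<xi>)\<bar> \<le> \<bar>g y\<bar>" by (intro mult_left_le) auto
    from mult_left_mono[OF this gauss_weight_nonneg] show ?thesis
      unfolding G_def abs_mult by (simp add: gauss_weight_nonneg mult_ac)
  qed
  have "integrable (lborel \<Otimes>\<^sub>M lborel) (\<lambda>(y, \<xi>). G y \<xi>)"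
    by (rule Bochner_Integration.integrable_bound[OF dominant G_measurable AE_I2])
       (auto simp: bound abs_mult gauss_weight_nonneg split: prod.split)
  then have "(\<integral>\<xi>. (\<integral>y. G y \<xi> \<partial>lborel) \<partial>lborel) = (\<integral>y. (\<integral>\<xi>. G y \<xi> \<partial>lborel) \<partial>lborel)"
    by (rule lborel_pair.Fubini_integral)
  moreover have "(\<lambda>\<xi>. (\<integral>y. G y \<xi> \<partial>lborel))
      = (\<lambda>\<xi>. gauss_weight \<sigma> \<xi> * (\<integral>y. g y * cos (2 * pi * (x - y) * \<xi>) \<partial>lborel))"
    unfolding G_def by simp
  ultimately have "(\<integral>\<xi>. gauss_weight \<sigma> \<xi> * (\<integral>y. g y * cos (2 * pi * (x - y) * \<xi>) \<partial>lborel) \<partial>lborel)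
      = (\<integral>y. (\<integral>\<xi>. G y \<xi> \<partial>lborel) \<partial>lborel)"
    by simp
  also have "(\<lambda>y. (\<integral>\<xi>. G y \<xi> \<partial>lborel)) = (\<lambda>y. g y * gauss_kernel \<sigma> (x - y))"
  proof
    fix y
    have "(\<lambda>\<xi>. G y \<xi>) = (\<lambda>\<xi>. g y * (gauss_weight \<sigma> \<xi> * cos (2 * pi * (x - y) * \<xi>)))"
      unfolding G_def by (rule ext) (rule mult.left_commute)
    then show "(\<integral>\<xi>. G y \<xi> \<partial>lborel) = g y * gauss_kernel \<sigma> (x - y)"
      using integral_gauss_weight_cos[OF \<sigma>, of "x - y"] by simp
  qed
  finally show ?thesis .
qed

lemma integral_gauss_weight_power_spectrum:
  assumes \<sigma>: "0 < \<sigma>"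
  shows "(\<integral>\<xi>. gauss_weight \<sigma> \<xi> * power_spectrum g \<xi> \<partial>lborel)
    = (\<integral>x. g x * (\<integral>y. g y * gauss_kernel \<sigma> (x - y) \<partial>lborel) \<partial>lborel)"
proof -
  define A where "A = (\<integral>x. \<bar>g x\<bar> \<partial>lborel)"
  have A_nonneg: "0 \<le> A" unfolding A_def by simp
  define F where "F = (\<lambda>x \<xi>. gauss_weight \<sigma> \<xi> * (g x * (cos (2 * pi * x * \<xi>) * fourier_cos g \<xi>
                                                    + sin (2 * pi * x * \<xi>) * fourier_sin g \<xi>)))"
  have F_measurable: "(\<lambda>(x, \<xi>). F x \<xi>) \<in> borel_measurable (lborel \<Otimes>\<^sub>M lborel)"
    unfolding F_def by measurable
  have rotation_le: "\<bar>cos (2 * pi * x * \<xi>) * fourier_cos g \<xi> + sin (2 * pi * x * \<xi>) * fourier_sin g \<xi>\<bar>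
      \<le> 2 * A" for x \<xi>
  proof -
    have "\<bar>cos (2 * pi * x * \<xi>) * fourier_cos g \<xi>\<bar> \<le> A" "\<bar>sin (2 * pi * x * \<xi>) * fourier_sin g \<xi>\<bar> \<le> A"
      using abs_fourier_cos_le[OF g_integrable, of \<xi>] abs_fourier_sin_le[OF g_integrable, of \<xi>]
      unfolding A_def abs_mult by (auto intro: order_trans[OF mult_left_le_one_le])
    then show ?thesis by linarith
  qed
  have dominant: "integrable (lborel \<Otimes>\<^sub>M lborel) (\<lambda>(x, \<xi>). (2 * A * \<bar>g x\<bar>) * gauss_weight \<sigma> \<xi>)"
    by (rule integrable_lborel_product) (use g_integrable integrable_gauss_weight[OF \<sigma>] in auto)
  have bound: "\<bar>F x \<xi>\<bar> \<le> 2 * A * \<bar>g x\<bar> * gauss_weight \<sigma> \<xi>" for x \<xi>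
    using mult_left_mono[OF rotation_le[of x \<xi>], of "\<bar>g x\<bar> * gauss_weight \<sigma> \<xi>"]
    unfolding F_def abs_mult by (simp add: gauss_weight_nonneg mult_ac)
  have "integrable (lborel \<Otimes>\<^sub>M lborel) (\<lambda>(x, \<xi>). F x \<xi>)"
    by (rule Bochner_Integration.integrable_bound[OF dominant F_measurable AE_I2])
       (auto simp: bound abs_mult gauss_weight_nonneg A_nonneg split: prod.split)
  then have "(\<integral>\<xi>. (\<integral>x. F x \<xi> \<partial>lborel) \<partial>lborel) = (\<integral>x. (\<integral>\<xi>. F x \<xi> \<partial>lborel) \<partial>lborel)"
    by (rule lborel_pair.Fubini_integral)
  moreover have "(\<integral>\<xi>. F x \<xi> \<partial>lborel) = g x * (\<integral>y. g y * gauss_kernel \<sigma> (x - y) \<partial>lborel)" for x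
  proof -
    have "(\<integral>\<xi>. F x \<xi> \<partial>lborel)
        = g x * (\<integral>\<xi>. gauss_weight \<sigma> \<xi> * (\<integral>y. g y * cos (2 * pi * (x - y) * \<xi>) \<partial>lborel) \<partial>lborel)"
      unfolding F_def fourier_rotation_eq_integral by (simp add: mult.left_commute)
    then show ?thesis by (simp only: integral_gauss_weight_convolution_cos[OF \<sigma>])
  qed
  ultimately show ?thesis
    unfolding F_def by (simp add: power_spectrum_eq_integral)
qed


lemma
  assumes \<sigma>: "0 < \<sigma>"
  shows integrable_convolution_square:
      "integrable lborel (\<lambda>x. \<integral>y. (g y)\<^sup>2 * gauss_kernel \<sigma> (x - y) \<partial>lborel)"
    and integral_convolution_square:
      "(\<integral>x. (\<integral>y. (g y)\<^sup>2 * gauss_kernel \<sigma> (x - y) \<partial>lborel) \<partial>lborel) = (\<integral>y. (g y)\<^sup>2 \<partial>lborel)"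
proof -
  have "integrable (lborel \<Otimes>\<^sub>M lborel) (\<lambda>(y, x). (g y)\<^sup>2 * gauss_kernel \<sigma> (x - y))"
  proof (rule lborel_pair.Fubini_integrable)
    show "(\<lambda>(y, x). (g y)\<^sup>2 * gauss_kernel \<sigma> (x - y)) \<in> borel_measurable (lborel \<Otimes>\<^sub>M lborel)"
      by measurable
    have "(\<integral>x. norm (case (y, x) of (y, x) \<Rightarrow> (g y)\<^sup>2 * gauss_kernel \<sigma> (x - y)) \<partial>lborel) = (g y)\<^sup>2"
      for y
      by (simp add: abs_mult gauss_kernel_nonneg integral_gauss_kernel_diff_left[OF \<sigma>])
    then show "integrable lborel
        (\<lambda>y. \<integral>x. norm (case (y, x) of (y, x) \<Rightarrow> (g y)\<^sup>2 * gauss_kernel \<sigma> (x - y)) \<partial>lborel)"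
      using integrable_square by simp
    show "AE y in lborel. integrable lborel
        (\<lambda>x. case (y, x) of (y, x) \<Rightarrow> (g y)\<^sup>2 * gauss_kernel \<sigma> (x - y))"
      using integrable_gauss_kernel_diff_left[OF \<sigma>] by simp
  qed
  from lborel_pair.integrable_product_swap[OF this]
  have swapped: "integrable (lborel \<Otimes>\<^sub>M lborel) (\<lambda>(x, y). (g y)\<^sup>2 * gauss_kernel \<sigma> (x - y))"
    by (simp add: case_prod_unfold)
  then show "integrable lborel (\<lambda>x. \<integral>y. (g y)\<^sup>2 * gauss_kernel \<sigma> (x - y) \<partial>lborel)"
    using lborel_pair.integrable_fst'[OF swapped] by simp
  have "(\<integral>x. (\<integral>y. (g y)\<^sup>2 * gauss_kernel \<sigma> (x - y) \<partial>lborel) \<partial>lborel)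
      = (\<integral>y. (\<integral>x. (g y)\<^sup>2 * gauss_kernel \<sigma> (x - y) \<partial>lborel) \<partial>lborel)"
    by (rule lborel_pair.Fubini_integral[symmetric]) (use swapped in simp)
  then show "(\<integral>x. (\<integral>y. (g y)\<^sup>2 * gauss_kernel \<sigma> (x - y) \<partial>lborel) \<partial>lborel) = (\<integral>y. (g y)\<^sup>2 \<partial>lborel)"
    by (simp add: integral_gauss_kernel_diff_left[OF \<sigma>])
qed

lemma integrable_bounded_mult_gauss_kernel:
  assumes "0 < \<sigma>" and bounded: "\<And>y. \<bar>f y\<bar> \<le> 1" and [measurable]: "f \<in> borel_measurable borel"
  shows "integrable lborel (\<lambda>y. f y * gauss_kernel \<sigma> (x - y))"
proof (rule Bochner_Integration.integrable_bound[OF integrable_gauss_kernel_diff_right[OF assms(1)]])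
  show "(\<lambda>y. f y * gauss_kernel \<sigma> (x - y)) \<in> borel_measurable lborel" by measurable
  show "AE y in lborel. norm (f y * gauss_kernel \<sigma> (x - y)) \<le> norm (gauss_kernel \<sigma> (x - y))"
    using bounded by (auto intro!: AE_I2 mult_left_le_one_le simp: abs_mult gauss_kernel_nonneg)
qed

text \<open>The mean of \<open>g\<close> against a probability kernel is dominated via \<open>2ab \<le> a\<^sup>2 + b\<^sup>2\<close>.\<close>

lemma mult_convolution_le:
  assumes \<sigma>: "0 < \<sigma>"
  shows "g x * (\<integral>y. g y * gauss_kernel \<sigma> (x - y) \<partial>lborel)
    \<le> (g x)\<^sup>2 / 2 + (\<integral>y. (g y)\<^sup>2 * gauss_kernel \<sigma> (x - y) \<partial>lborel) / 2"
proof -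
  have "\<bar>(g y)\<^sup>2\<bar> \<le> 1" for y using g_bounded[of y] by (simp add: abs_square_le_1)
  then have sq: "integrable lborel (\<lambda>y. (g y)\<^sup>2 * gauss_kernel \<sigma> (x - y))"
    by (intro integrable_bounded_mult_gauss_kernel[OF \<sigma>]) auto
  have "\<bar>g x * g y\<bar> \<le> 1" for y using g_bounded[of x] g_bounded[of y] by (simp add: abs_mult mult_le_one)
  then have "integrable lborel (\<lambda>y. (g x * g y) * gauss_kernel \<sigma> (x - y))"
    by (intro integrable_bounded_mult_gauss_kernel[OF \<sigma>]) auto
  moreover have "g x * g y * gauss_kernel \<sigma> (x - y)
      \<le> (g x)\<^sup>2 / 2 * gauss_kernel \<sigma> (x - y) + (g y)\<^sup>2 * gauss_kernel \<sigma> (x - y) / 2" for y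
  proof -
    have "g x * g y \<le> (g x)\<^sup>2 / 2 + (g y)\<^sup>2 / 2"
      using sum_squares_ge_zero[of "g x - g y" 0] by (simp add: power2_eq_square algebra_simps)
    from mult_right_mono[OF this gauss_kernel_nonneg] show ?thesis by (simp add: algebra_simps)
  qed
  ultimately have "(\<integral>y. g x * g y * gauss_kernel \<sigma> (x - y) \<partial>lborel)
      \<le> (\<integral>y. (g x)\<^sup>2 / 2 * gauss_kernel \<sigma> (x - y) + (g y)\<^sup>2 * gauss_kernel \<sigma> (x - y) / 2 \<partial>lborel)"
    using integrable_gauss_kernel_diff_right[OF \<sigma>] sq by (intro integral_mono) auto
  also have "\<dots> = (g x)\<^sup>2 / 2 + (\<integral>y. (g y)\<^sup>2 * gauss_kernel \<sigma> (x - y) \<partial>lborel) / 2"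
    using integrable_gauss_kernel_diff_right[OF \<sigma>] sq
    by (simp add: integral_gauss_kernel_diff_right[OF \<sigma>])
  finally show ?thesis by (simp add: mult.assoc)
qed

lemma integrable_mult_convolution:
  assumes \<sigma>: "0 < \<sigma>"
  shows "integrable lborel (\<lambda>x. g x * (\<integral>y. g y * gauss_kernel \<sigma> (x - y) \<partial>lborel))"
proof (rule Bochner_Integration.integrable_bound[OF g_integrable])
  show "(\<lambda>x. g x * (\<integral>y. g y * gauss_kernel \<sigma> (x - y) \<partial>lborel)) \<in> borel_measurable lborel"
    by measurable
  have "\<bar>\<integral>y. g y * gauss_kernel \<sigma> (x - y) \<partial>lborel\<bar> \<le> 1" for x
  proof -
    have "\<bar>\<integral>y. g y * gauss_kernel \<sigma> (x - y) \<partial>lborel\<bar> \<le> (\<integral>y. \<bar>g y * gauss_kernel \<sigma> (x - y)\<bar> \<partial>lborel)"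
      by (rule integral_abs_bound)
    also have "\<dots> \<le> (\<integral>y. gauss_kernel \<sigma> (x - y) \<partial>lborel)"
      using integrable_abs[OF integrable_bounded_mult_gauss_kernel[OF \<sigma> g_bounded g_measurable, of x]]
        integrable_gauss_kernel_diff_right[OF \<sigma>] g_bounded
      by (intro integral_mono) (auto simp: abs_mult gauss_kernel_nonneg intro!: mult_left_le_one_le)
    finally show ?thesis by (simp add: integral_gauss_kernel_diff_right[OF \<sigma>])
  qed
  then show "AE x in lborel. norm (g x * (\<integral>y. g y * gauss_kernel \<sigma> (x - y) \<partial>lborel)) \<le> norm (g x)"
    by (auto simp: abs_mult intro!: AE_I2 mult_left_le)
qed

lemma integral_mult_convolution_le:
  assumes \<sigma>: "0 < \<sigma>"
  shows "(\<integral>x. g x * (\<integral>y. g y * gauss_kernel \<sigma> (x - y) \<partial>lborel) \<partial>lborel) \<le> (\<integral>x. (g x)\<^sup>2 \<partial>lborel)"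
proof -
  have "(\<integral>x. g x * (\<integral>y. g y * gauss_kernel \<sigma> (x - y) \<partial>lborel) \<partial>lborel)
      \<le> (\<integral>x. (g x)\<^sup>2 / 2 + (\<integral>y. (g y)\<^sup>2 * gauss_kernel \<sigma> (x - y) \<partial>lborel) / 2 \<partial>lborel)"
    using integrable_mult_convolution[OF \<sigma>] integrable_square integrable_convolution_square[OF \<sigma>]
    by (intro integral_mono mult_convolution_le[OF \<sigma>]) auto
  also have "\<dots> = (\<integral>x. (g x)\<^sup>2 \<partial>lborel)"
    using integrable_square integrable_convolution_square[OF \<sigma>]
    by (simp add: integral_convolution_square[OF \<sigma>])
  finally show ?thesis .
qed

text \<open>The Gaussian damping is removed by monotone convergence.\<close>

lemma nn_integral_power_spectrum_le:
  "(\<integral>\<^sup>+\<xi>. ennreal (power_spectrum g \<xi>) \<partial>lborel) \<le> ennreal (\<integral>x. (g x)\<^sup>2 \<partial>lborel)"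
proof -
  define f where "f n \<xi> = ennreal (gauss_weight (Suc n) \<xi> * power_spectrum g \<xi>)" for n \<xi>
  have inc: "incseq f"
    unfolding f_def incseq_def le_fun_def
    by (auto intro!: ennreal_leI mult_right_mono gauss_weight_mono power_spectrum_nonneg)
  have sup: "(SUP n. f n \<xi>) = ennreal (power_spectrum g \<xi>)" for \<xi>
  proof (rule LIMSEQ_unique)
    show "(\<lambda>n. f n \<xi>) \<longlonglongrightarrow> (SUP n. f n \<xi>)"
      by (rule LIMSEQ_SUP) (use inc in \<open>auto simp: incseq_def le_fun_def\<close>)
    have "(\<lambda>n. f n \<xi>) \<longlonglongrightarrow> ennreal (1 * power_spectrum g \<xi>)"
      unfolding f_def by (intro tendsto_ennrealI tendsto_mult gauss_weight_tendsto_1 tendsto_const)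
    then show "(\<lambda>n. f n \<xi>) \<longlonglongrightarrow> ennreal (power_spectrum g \<xi>)" by simp
  qed
  have "integral\<^sup>N lborel (f n) \<le> ennreal (\<integral>x. (g x)\<^sup>2 \<partial>lborel)" for n
  proof -
    have \<sigma>: "0 < real (Suc n)" by simp
    have "integrable lborel (\<lambda>\<xi>. gauss_weight (Suc n) \<xi> * power_spectrum g \<xi>)"
    proof (rule Bochner_Integration.integrable_bound
        [OF integrable_mult_left[OF integrable_gauss_weight[OF \<sigma>]]])
      show "(\<lambda>\<xi>. gauss_weight (Suc n) \<xi> * power_spectrum g \<xi>) \<in> borel_measurable lborel"
        by measurable
      show "AE \<xi> in lborel. norm (gauss_weight (Suc n) \<xi> * power_spectrum g \<xi>)
          \<le> norm (gauss_weight (Suc n) \<xi> * (2 * (\<integral>x. \<bar>g x\<bar> \<partial>lborel)\<^sup>2))"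
        using power_spectrum_le[OF g_integrable] power_spectrum_nonneg gauss_weight_nonneg
        by (auto intro!: AE_I2 mult_left_mono simp: abs_mult)
    qed
    then have "integral\<^sup>N lborel (f n) = ennreal (\<integral>\<xi>. gauss_weight (Suc n) \<xi> * power_spectrum g \<xi> \<partial>lborel)"
      unfolding f_def
      by (rule nn_integral_eq_integral) (auto simp: power_spectrum_nonneg gauss_weight_nonneg)
    also have "\<dots> \<le> ennreal (\<integral>x. (g x)\<^sup>2 \<partial>lborel)"
      using integral_gauss_weight_power_spectrum[OF \<sigma>] integral_mult_convolution_le[OF \<sigma>]
      by (intro ennreal_leI) simp
    finally show ?thesis .
  qed
  moreover have "(\<integral>\<^sup>+\<xi>. ennreal (power_spectrum g \<xi>) \<partial>lborel) = (SUP n. integral\<^sup>N lborel (f n))"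
    unfolding sup[symmetric]
    by (rule nn_integral_monotone_convergence_SUP[OF inc]) (unfold f_def, measurable)
  ultimately show ?thesis by (simp add: SUP_least)
qed

end


section \<open>Dyadic estimates\<close>

lemma power_of_two_bracket:
  fixes x :: real
  assumes "1 \<le> x"
  obtains n where "2 ^ n \<le> x" "x < 2 ^ Suc n"
proof -
  define k where "k = nat \<lfloor>x\<rfloor>"
  have "1 \<le> k" using assms unfolding k_def by linarith
  then obtain n where n: "2 ^ n \<le> k" "k + 1 \<le> 2 ^ Suc n"
    using ex_power_ivl1[of 2 k] by auto
  have "real (2 ^ n) \<le> real k" "real (k + 1) \<le> real (2 ^ Suc n)"
    using n by (simp_all only: of_nat_le_iff)
  then have "(2::real) ^ n \<le> real k" "real k + 1 \<le> (2::real) ^ Suc n" by simp_all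
  moreover have "real k \<le> x" "x < real k + 1" using assms unfolding k_def by linarith+
  ultimately have "2 ^ n \<le> x" "x < 2 ^ Suc n" by linarith+
  then show thesis by (rule that)
qed

lemma weight_le_dyadic_power:
  fixes s \<xi> :: real
  assumes s: "0 < s" "s \<le> 1" and \<xi>: "1 \<le> 4 * \<bar>\<xi>\<bar>" "4 * \<bar>\<xi>\<bar> < 2 ^ Suc n"
  shows "(1 + \<xi>\<^sup>2) powr s \<le> 17 * 2 powr (2 * s * real n)"
proof -
  have "(1 + \<xi>\<^sup>2) powr s \<le> (17 * \<bar>\<xi>\<bar>\<^sup>2) powr s"
  proof (rule powr_mono2)
    have "1 \<le> (4 * \<bar>\<xi>\<bar>)\<^sup>2" by (rule one_le_power) (use \<xi> in simp)
    then show "1 + \<xi>\<^sup>2 \<le> 17 * \<bar>\<xi>\<bar>\<^sup>2" by (simp add: power_mult_distrib)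
  qed (use s in auto)
  also have "\<dots> = 17 powr s * \<bar>\<xi>\<bar> powr (2 * s)"
  proof -
    have "0 < \<bar>\<xi>\<bar>" using \<xi>(1) by linarith
    then have "\<bar>\<xi>\<bar>\<^sup>2 = \<bar>\<xi>\<bar> powr (real 2)" by (rule powr_realpow[symmetric])
    then have "(\<bar>\<xi>\<bar>\<^sup>2) powr s = \<bar>\<xi>\<bar> powr (2 * s)" by (simp only: powr_powr) simp
    then show ?thesis by (simp add: powr_mult)
  qed
  also have "\<dots> \<le> 17 * (2 ^ n) powr (2 * s)"
  proof (rule mult_mono)
    show "17 powr s \<le> 17" using powr_mono[of s 1 17] s by simp
    show "\<bar>\<xi>\<bar> powr (2 * s) \<le> (2 ^ n) powr (2 * s)"
      by (rule powr_mono2) (use s \<xi>(2) in auto)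
  qed auto
  also have "((2::real) ^ n) powr (2 * s) = 2 powr (2 * s * real n)"
    by (simp add: powr_powr mult_ac flip: powr_realpow)
  finally show ?thesis .
qed

text \<open>For \<open>|\<xi>| \<ge> 1/4\<close> the dyadic step \<open>h = 2\<^sup>-\<^sup>n\<close> with \<open>h|\<xi>| \<in> [1/4, 1/2)\<close> makes
  \<open>cos (2\<pi>h\<xi>) \<le> 0\<close> while \<open>h\<^sup>-\<^sup>2\<^sup>s\<close> is comparable to \<open>|\<xi>|\<^sup>2\<^sup>s\<close>.\<close>

lemma sobolev_weight_le_dyadic:
  fixes s \<xi> :: real
  assumes s: "0 < s" "s \<le> 1"
  obtains n where "(1 + \<xi>\<^sup>2) powr s
    \<le> 2 + 9 * (2 powr (2 * s * real n) * (2 - 2 * cos (2 * pi * (1 / 2 ^ n) * \<xi>)))"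
proof (cases "\<bar>\<xi>\<bar> < 1/4")
  case True
  have "\<xi>\<^sup>2 \<le> 1" using True by (simp add: abs_square_le_1)
  then have "(1 + \<xi>\<^sup>2) powr s \<le> 2"
    using powr_mono[of s 1 "1 + \<xi>\<^sup>2"] s by simp
  moreover have "0 \<le> 9 * (2 powr (2 * s * real 0) * (2 - 2 * cos (2 * pi * (1 / 2 ^ 0) * \<xi>)))"
    using cos_le_one[of "2 * pi * \<xi>"] by simp
  ultimately have "(1 + \<xi>\<^sup>2) powr s
      \<le> 2 + 9 * (2 powr (2 * s * real 0) * (2 - 2 * cos (2 * pi * (1 / 2 ^ 0) * \<xi>)))"
    by linarith
  then show thesis by (rule that)
next
  case False
  then have \<xi>: "1 \<le> 4 * \<bar>\<xi>\<bar>" by simp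
  then obtain n where n: "2 ^ n \<le> 4 * \<bar>\<xi>\<bar>" "4 * \<bar>\<xi>\<bar> < 2 ^ Suc n"
    using power_of_two_bracket by blast
  define t where "t = \<bar>\<xi>\<bar> / 2 ^ n"
  have t: "1/4 \<le> t" "t < 1/2" using n unfolding t_def by (simp_all add: field_simps)
  have "\<bar>2 * pi * (1 / 2 ^ n) * \<xi>\<bar> = 2 * pi * t" unfolding t_def by (simp add: abs_mult)
  then have "cos (2 * pi * (1 / 2 ^ n) * \<xi>) = cos (2 * pi * t)" by (metis cos_abs_real)
  moreover have "0 \<le> cos (pi - 2 * pi * t)"
    by (rule cos_ge_zero) (use t pi_gt_zero in \<open>auto simp: field_simps\<close>)
  ultimately have "2 \<le> 2 - 2 * cos (2 * pi * (1 / 2 ^ n) * \<xi>)" by simp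
  then have "2 powr (2 * s * real n) * 2
      \<le> 2 powr (2 * s * real n) * (2 - 2 * cos (2 * pi * (1 / 2 ^ n) * \<xi>))"
    by (rule mult_left_mono) simp
  then have "17 * 2 powr (2 * s * real n)
      \<le> 9 * (2 powr (2 * s * real n) * (2 - 2 * cos (2 * pi * (1 / 2 ^ n) * \<xi>)))"
    using powr_ge_zero[of 2 "2 * s * real n"] by linarith
  with weight_le_dyadic_power[OF s \<xi> n(2)] show thesis
    by (intro that[of n]) linarith
qed

definition dyadic_sum_constant :: "real \<Rightarrow> real" where
  "dyadic_sum_constant s = 4 / (2 powr (2 * s) - 1) + 2 / (1 - 2 powr (2 * s - 1))"

lemma dyadic_sum_constant_nonneg:
  assumes "0 < s" "s < 1/2"
  shows "0 \<le> dyadic_sum_constant s"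
proof -
  have "1 < (2::real) powr (2 * s)" "(2::real) powr (2 * s - 1) < 1"
    using assms by (auto intro: powr_less_one)
  then show ?thesis unfolding dyadic_sum_constant_def by simp
qed

lemma dyadic_head_le:
  assumes s: "0 < s" "s < 1/2" and G: "0 < G" and N: "N = 0 \<or> G \<le> 4 / 2 ^ N"
  shows "(\<Sum>n<N. 2 powr (2 * s * real n) * G) \<le> 4 / (2 powr (2 * s) - 1) * G powr (1 - 2 * s)"
proof (cases "N = 0")
  case True
  have "1 < (2::real) powr (2 * s)" using s by simp
  then show ?thesis using True by simp
next
  case False
  define q :: real where "q = 2 powr (2 * s)"
  have q: "1 < q" unfolding q_def using s by simp
  have qn: "2 powr (2 * s * real n) = q ^ n" for n
    unfolding q_def by (simp add: powr_powr mult_ac flip: powr_realpow)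
  have "q ^ N = (2 ^ N) powr (2 * s)"
    unfolding q_def by (simp add: powr_powr mult_ac flip: powr_realpow)
  also have "\<dots> \<le> (4 / G) powr (2 * s)"
    using N False G s by (intro powr_mono2) (auto simp: field_simps)
  also have "\<dots> \<le> 4 / G powr (2 * s)"
    using G s powr_mono[of "2 * s" 1 "4::real"] by (simp add: powr_divide divide_right_mono)
  finally have qN: "q ^ N \<le> 4 / G powr (2 * s)" .
  have "(\<Sum>n<N. q ^ n) = (q ^ N - 1) / (q - 1)"
    using q by (simp add: sum_gp_strict) (simp add: field_simps)
  then have "(\<Sum>n<N. 2 powr (2 * s * real n) * G) = G * ((q ^ N - 1) / (q - 1))"
    unfolding qn by (simp add: mult.commute flip: sum_distrib_left)
  also have "\<dots> \<le> G * (4 / G powr (2 * s) / (q - 1))"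
    using G q qN by (intro mult_left_mono divide_right_mono) auto
  also have "\<dots> = 4 / (q - 1) * G powr (1 - 2 * s)"
    using G by (simp add: powr_diff field_simps)
  finally show ?thesis unfolding q_def .
qed

lemma dyadic_tail_le:
  assumes s: "0 < s" "s < 1/2" and N: "2 / 2 ^ N < G"
  shows "summable (\<lambda>n. 2 powr (2 * s * real (n + N)) * (2 / 2 ^ (n + N)))"
    and "(\<Sum>n. 2 powr (2 * s * real (n + N)) * (2 / 2 ^ (n + N)))
      \<le> 2 / (1 - 2 powr (2 * s - 1)) * G powr (1 - 2 * s)"
proof -
  define r :: real where "r = 2 powr (2 * s - 1)"
  have r: "0 < r" "r < 1" unfolding r_def using s by (auto intro: powr_less_one)
  have dyadic: "2 powr (2 * s * real m) * (2 / 2 ^ m) = 2 * r ^ m" for m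
    unfolding r_def powr_diff by (simp add: powr_power power_divide mult_ac)
  have terms: "2 powr (2 * s * real (n + N)) * (2 / 2 ^ (n + N)) = 2 * r ^ N * r ^ n" for n
    by (subst dyadic) (simp add: power_add)
  show "summable (\<lambda>n. 2 powr (2 * s * real (n + N)) * (2 / 2 ^ (n + N)))"
    unfolding terms using r by (intro summable_mult summable_geometric) simp
  have "r ^ N = (1 / 2 ^ N) powr (1 - 2 * s)"
    unfolding r_def by (simp add: powr_powr powr_diff powr_divide mult_ac flip: powr_realpow)
  also have "\<dots> \<le> G powr (1 - 2 * s)"
  proof (rule powr_mono2)
    have "(1::real) / 2 ^ N \<le> 2 / 2 ^ N" by (intro divide_right_mono) auto
    then show "1 / 2 ^ N \<le> G" using N by linarith
  qed (use s in auto)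
  finally have rN: "r ^ N \<le> G powr (1 - 2 * s)" .
  have "(\<Sum>n. 2 powr (2 * s * real (n + N)) * (2 / 2 ^ (n + N))) = 2 * r ^ N / (1 - r)"
    unfolding terms using r by (simp add: suminf_mult suminf_geometric)
  also have "\<dots> \<le> 2 * G powr (1 - 2 * s) / (1 - r)"
    using rN r by (intro divide_right_mono) auto
  finally show "(\<Sum>n. 2 powr (2 * s * real (n + N)) * (2 / 2 ^ (n + N)))
      \<le> 2 / (1 - 2 powr (2 * s - 1)) * G powr (1 - 2 * s)"
    unfolding r_def by simp
qed

text \<open>Up to the cross-over index \<open>N\<close> where \<open>2\<^sup>1\<^sup>-\<^sup>N\<close> drops below \<open>G\<close> the series is a
  geometric sum of ratio \<open>2\<^sup>2\<^sup>s\<close>, afterwards one of ratio \<open>2\<^sup>2\<^sup>s\<^sup>-\<^sup>1\<close>; both are of order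
  \<open>G\<^sup>1\<^sup>-\<^sup>2\<^sup>s\<close>.\<close>

lemma suminf_dyadic_min_le:
  assumes s: "0 < s" "s < 1/2" and G: "0 < G"
  shows "(\<Sum>n. ennreal (2 powr (2 * s * real n) * min G (2 / 2 ^ n)))
    \<le> ennreal (dyadic_sum_constant s * G powr (1 - 2 * s))"
proof -
  define t where "t n = 2 powr (2 * s * real n) * min G (2 / 2 ^ n)" for n
  have ex: "\<exists>N. 2 / 2 ^ N < G"
  proof -
    obtain N where "2 / G < 2 ^ N" using real_arch_pow[of 2 "2 / G"] by auto
    then show ?thesis using G by (auto simp: field_simps)
  qed
  define N where "N = (LEAST N. 2 / 2 ^ N < G)"
  have N: "2 / 2 ^ N < G" unfolding N_def by (rule LeastI_ex[OF ex])
  have "N = 0 \<or> G \<le> 4 / 2 ^ N"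
  proof (cases N)
    case (Suc M)
    then have "M < N" by simp
    then have "\<not> 2 / 2 ^ M < G" unfolding N_def by (rule not_less_Least)
    then show ?thesis using Suc by simp
  qed simp
  note head = dyadic_head_le[OF s G this] and tail = dyadic_tail_le[OF s N]
  have "2 / 2 ^ (n + N) < G" for n
  proof -
    have "(2::real) / 2 ^ (n + N) \<le> 2 / 2 ^ N"
      by (intro divide_left_mono power_increasing) auto
    then show ?thesis using N by linarith
  qed
  then have tail_eq: "(\<lambda>n. t (n + N)) = (\<lambda>n. 2 powr (2 * s * real (n + N)) * (2 / 2 ^ (n + N)))"
    unfolding t_def by (simp add: min_absorb2 less_imp_le)
  have "summable (\<lambda>n. t (n + N))" unfolding tail_eq by (rule tail(1))
  then have summable: "summable t" by (rule summable_iff_shift[THEN iffD1])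
  have "(\<Sum>n<N. t n) \<le> (\<Sum>n<N. 2 powr (2 * s * real n) * G)"
    unfolding t_def by (intro sum_mono mult_left_mono) auto
  then have "(\<Sum>n. t n) \<le> dyadic_sum_constant s * G powr (1 - 2 * s)"
    using head tail(2) suminf_split_initial_segment[OF summable, of N]
    unfolding dyadic_sum_constant_def tail_eq by (simp add: algebra_simps)
  moreover have "(\<Sum>n. ennreal (t n)) = ennreal (\<Sum>n. t n)"
    by (rule suminf_ennreal2[OF _ summable]) (use G in \<open>simp add: t_def\<close>)
  ultimately show ?thesis unfolding t_def by (simp add: ennreal_leI)
qed

section \<open>Sobolev regularity of Cantor indicators\<close>

lemma suminf_ennreal_commute:
  fixes f :: "nat \<Rightarrow> nat \<Rightarrow> ennreal"
  shows "(\<Sum>n. \<Sum>k. f n k) = (\<Sum>k. \<Sum>n. f n k)"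
proof -
  have "(\<Sum>n. \<Sum>k. f n k) = (\<integral>\<^sup>+n. (\<Sum>k. f n k) \<partial>count_space UNIV)"
    by (simp add: nn_integral_count_space_nat)
  also have "\<dots> = (\<Sum>k. \<integral>\<^sup>+n. f n k \<partial>count_space UNIV)"
    by (rule nn_integral_suminf) simp
  also have "\<dots> = (\<Sum>k. \<Sum>n. f n k)"
    by (simp add: nn_integral_count_space_nat)
  finally show ?thesis .
qed

lemma in_sobolev_mono:
  assumes "in_sobolev s f" "t \<le> s"
  shows "in_sobolev t f"
proof -
  have "(\<integral>\<^sup>+\<xi>. ennreal ((1 + \<xi>\<^sup>2) powr t * (cmod (fourier f \<xi>))\<^sup>2) \<partial>lborel)
      \<le> (\<integral>\<^sup>+\<xi>. ennreal ((1 + \<xi>\<^sup>2) powr s * (cmod (fourier f \<xi>))\<^sup>2) \<partial>lborel)"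
    using assms(2) by (intro nn_integral_mono ennreal_leI mult_right_mono powr_mono) auto
  then show ?thesis using assms(1) unfolding in_sobolev_def by (auto intro: le_less_trans)
qed

lemma sobolev_weight_power_spectrum_le:
  assumes g: "integrable lborel g" and s: "0 < s" "s \<le> 1"
  shows "ennreal ((1 + \<xi>\<^sup>2) powr s * power_spectrum g \<xi>)
    \<le> ennreal (2 * power_spectrum g \<xi>)
      + (\<Sum>n. ennreal (9 * 2 powr (2 * s * real n))
               * ennreal (power_spectrum (\<lambda>x. g x - g (x - 1 / 2 ^ n)) \<xi>))"
proof -
  define D where "D n = power_spectrum (\<lambda>x. g x - g (x - 1 / 2 ^ n)) \<xi>" for n
  obtain n where n: "(1 + \<xi>\<^sup>2) powr s
      \<le> 2 + 9 * (2 powr (2 * s * real n) * (2 - 2 * cos (2 * pi * (1 / 2 ^ n) * \<xi>)))"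
    using sobolev_weight_le_dyadic[OF s] by blast
  have "(1 + \<xi>\<^sup>2) powr s * power_spectrum g \<xi>
      \<le> 2 * power_spectrum g \<xi> + 9 * 2 powr (2 * s * real n) * D n"
    using mult_right_mono[OF n power_spectrum_nonneg]
    unfolding D_def power_spectrum_shift_diff[OF g] by (simp add: algebra_simps)
  then have "ennreal ((1 + \<xi>\<^sup>2) powr s * power_spectrum g \<xi>)
      \<le> ennreal (2 * power_spectrum g \<xi>) + ennreal (9 * 2 powr (2 * s * real n)) * ennreal (D n)"
    by (simp add: D_def power_spectrum_nonneg flip: ennreal_plus ennreal_mult)
  also have "\<dots> \<le> ennreal (2 * power_spectrum g \<xi>)
      + (\<Sum>n. ennreal (9 * 2 powr (2 * s * real n)) * ennreal (D n))"
    using sum_le_suminf[OF summableI, of "{n}" "\<lambda>n. ennreal (9 * 2 powr (2 * s * real n)) * ennreal (D n)"]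
    by (intro add_left_mono) simp
  finally show ?thesis unfolding D_def .
qed

context unit_bounded_integrable
begin

lemma nn_integral_sobolev_weight_le:
  assumes s: "0 < s" "s \<le> 1"
  shows "(\<integral>\<^sup>+\<xi>. ennreal ((1 + \<xi>\<^sup>2) powr s * power_spectrum g \<xi>) \<partial>lborel)
    \<le> 2 * ennreal (\<integral>x. (g x)\<^sup>2 \<partial>lborel)
      + (\<Sum>n. ennreal (9 * 2 powr (2 * s * real n))
               * (\<integral>\<^sup>+\<xi>. ennreal (power_spectrum (\<lambda>x. g x - g (x - 1 / 2 ^ n)) \<xi>) \<partial>lborel))"
proof -
  define D where "D n \<xi> = power_spectrum (\<lambda>x. g x - g (x - 1 / 2 ^ n)) \<xi>" for n \<xi>
  have [measurable]: "D n \<in> borel_measurable borel" for n unfolding D_def by measurable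
  have "ennreal ((1 + \<xi>\<^sup>2) powr s * power_spectrum g \<xi>)
      \<le> ennreal (2 * power_spectrum g \<xi>) + (\<Sum>n. ennreal (9 * 2 powr (2 * s * real n)) * ennreal (D n \<xi>))"
    for \<xi>
    unfolding D_def by (rule sobolev_weight_power_spectrum_le[OF g_integrable s])
  then have "(\<integral>\<^sup>+\<xi>. ennreal ((1 + \<xi>\<^sup>2) powr s * power_spectrum g \<xi>) \<partial>lborel)
      \<le> (\<integral>\<^sup>+\<xi>. ennreal (2 * power_spectrum g \<xi>)
              + (\<Sum>n. ennreal (9 * 2 powr (2 * s * real n)) * ennreal (D n \<xi>)) \<partial>lborel)"
    by (rule nn_integral_mono)
  also have "\<dots> = (\<integral>\<^sup>+\<xi>. ennreal (2 * power_spectrum g \<xi>) \<partial>lborel)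
      + (\<Sum>n. ennreal (9 * 2 powr (2 * s * real n)) * (\<integral>\<^sup>+\<xi>. ennreal (D n \<xi>) \<partial>lborel))"
    by (subst nn_integral_add) (auto simp: nn_integral_suminf nn_integral_cmult)
  also have "(\<integral>\<^sup>+\<xi>. ennreal (2 * power_spectrum g \<xi>) \<partial>lborel)
      = 2 * (\<integral>\<^sup>+\<xi>. ennreal (power_spectrum g \<xi>) \<partial>lborel)"
    by (subst nn_integral_cmult[symmetric]) (auto simp: ennreal_mult power_spectrum_nonneg)
  also have "\<dots> \<le> 2 * ennreal (\<integral>x. (g x)\<^sup>2 \<partial>lborel)"
    by (intro mult_left_mono nn_integral_power_spectrum_le) simp
  finally show ?thesis unfolding D_def by (simp add: add_right_mono)
qed

end

context cantor_sequence
begin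

abbreviation cantor_indicator :: "real \<Rightarrow> real" where
  "cantor_indicator \<equiv> indicator (cantor_set l)"

lemma integrable_indicator_cantor_set: "integrable lborel cantor_indicator"
proof (rule integrable_real_indicator)
  have "emeasure lborel (cantor_set l) \<le> emeasure lborel {0..1::real}"
    by (intro emeasure_mono cantor_set_subset) simp
  then show "emeasure lborel (cantor_set l) < \<infinity>" by (simp add: le_less_trans)
qed simp

lemma unit_bounded_integrable_indicator: "unit_bounded_integrable cantor_indicator"
  by unfold_locales (auto simp: integrable_indicator_cantor_set)

lemma unit_bounded_integrable_shift_diff:
  "unit_bounded_integrable (\<lambda>x. cantor_indicator x - cantor_indicator (x - h))"
proof
  have "integrable lborel (\<lambda>x. cantor_indicator (x - h))"
    using lborel_integrable_real_affine[OF integrable_indicator_cantor_set, of 1 "-h"] by simp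
  then show "integrable lborel (\<lambda>x. cantor_indicator x - cantor_indicator (x - h))"
    using integrable_indicator_cantor_set by simp
qed (simp add: indicator_def)

lemma square_shift_diff_le:
  assumes "0 \<le> h"
  shows "ennreal ((cantor_indicator x - cantor_indicator (x - h))\<^sup>2) \<le> indicator (collar h) x + indicator (collar h) (x - h)"
proof (cases "x \<in> cantor_set l \<longleftrightarrow> x - h \<in> cantor_set l")
  case False
  then consider "x \<in> cantor_set l" "x - h \<notin> cantor_set l" | "x \<notin> cantor_set l" "x - h \<in> cantor_set l"
    by blast
  then show ?thesis
  proof cases
    case 1
    have "x - h \<in> collar h" by (rule in_collar_if_near_cantor_set[OF 1(2) 1(1)]) (use assms in simp)
    then show ?thesis using 1 by (simp add: indicator_def)
  next
    case 2
    have "x \<in> collar h" by (rule in_collar_if_near_cantor_set[OF 2(1) 2(2)]) (use assms in simp)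
    then show ?thesis using 2 by (simp add: indicator_def)
  qed
qed (auto simp: indicator_def)

lemma nn_integral_power_spectrum_shift_diff_le:
  assumes "0 \<le> h"
  shows "(\<integral>\<^sup>+\<xi>. ennreal (power_spectrum (\<lambda>x. cantor_indicator x - cantor_indicator (x - h)) \<xi>) \<partial>lborel)
    \<le> 2 * emeasure lborel (collar h)"
proof -
  interpret diff: unit_bounded_integrable "\<lambda>x. cantor_indicator x - cantor_indicator (x - h)"
    by (rule unit_bounded_integrable_shift_diff)
  have "(\<integral>\<^sup>+\<xi>. ennreal (power_spectrum (\<lambda>x. cantor_indicator x - cantor_indicator (x - h)) \<xi>) \<partial>lborel)
      \<le> ennreal (\<integral>x. (cantor_indicator x - cantor_indicator (x - h))\<^sup>2 \<partial>lborel)"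
    by (rule diff.nn_integral_power_spectrum_le)
  also have "\<dots> = (\<integral>\<^sup>+x. ennreal ((cantor_indicator x - cantor_indicator (x - h))\<^sup>2) \<partial>lborel)"
    by (rule nn_integral_eq_integral[symmetric]) (use diff.integrable_square in auto)
  also have "\<dots> \<le> (\<integral>\<^sup>+x. indicator (collar h) x + indicator (collar h) (x - h) \<partial>lborel)"
    by (intro nn_integral_mono square_shift_diff_le assms)
  also have "\<dots> = (\<integral>\<^sup>+x. indicator (collar h) x \<partial>lborel) + (\<integral>\<^sup>+x. indicator (collar h) (x - h) \<partial>lborel)"
    by (rule nn_integral_add) auto
  also have "(\<integral>\<^sup>+x. indicator (collar h) (x - h) \<partial>lborel) = (\<integral>\<^sup>+x. indicator (collar h) x \<partial>lborel)"
    using nn_integral_real_affine[of "indicator (collar h) :: real \<Rightarrow> ennreal" 1 "-h"] by simp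
  finally show ?thesis by (simp add: mult_2)
qed

lemma weighted_emeasure_dyadic_collar_le:
  assumes "0 \<le> w"
  shows "ennreal w * emeasure lborel (collar (1 / 2 ^ n))
    \<le> ennreal (w * min 2 (2 / 2 ^ n))
      + (\<Sum>k. ennreal (2 ^ k * (w * min (gap l (Suc k)) (2 / 2 ^ n))))"
proof -
  have "(2::real) / 2 ^ n \<le> 2" by (simp add: divide_le_eq)
  then have head: "ennreal w * ennreal (2 / 2 ^ n) = ennreal (w * min 2 (2 / 2 ^ n))"
    using assms by (simp add: min_absorb2 flip: ennreal_mult')
  have "ennreal w * ennreal (2 ^ k * min (gap l (Suc k)) (2 / 2 ^ n))
      = ennreal (2 ^ k * (w * min (gap l (Suc k)) (2 / 2 ^ n)))" for k
    using assms by (simp add: mult.left_commute flip: ennreal_mult')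
  then have tail: "ennreal w * (\<Sum>k. ennreal (2 ^ k * min (gap l (Suc k)) (2 / 2 ^ n)))
      = (\<Sum>k. ennreal (2 ^ k * (w * min (gap l (Suc k)) (2 / 2 ^ n))))"
    by (simp flip: ennreal_suminf_cmult)
  have "ennreal w * emeasure lborel (collar (1 / 2 ^ n))
      \<le> ennreal w * (ennreal (2 / 2 ^ n) + (\<Sum>k. ennreal (2 ^ k * min (gap l (Suc k)) (2 / 2 ^ n))))"
    using emeasure_collar[of "1 / 2 ^ n"] by (intro mult_left_mono) auto
  also have "\<dots> = ennreal (w * min 2 (2 / 2 ^ n))
      + (\<Sum>k. ennreal (2 ^ k * (w * min (gap l (Suc k)) (2 / 2 ^ n))))"
    unfolding distrib_left head tail ..
  finally show ?thesis .
qed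

lemma suminf_dyadic_collar_finite:
  assumes s: "0 < s" "s < 1/2"
    and gaps: "summable (\<lambda>k. 2 ^ k * gap l (Suc k) powr (1 - 2 * s))"
  shows "(\<Sum>n. ennreal (2 powr (2 * s * real n)) * emeasure lborel (collar (1 / 2 ^ n))) < \<infinity>"
proof -
  define w where "w n = 2 powr (2 * s * real n)" for n :: nat
  define C where "C = dyadic_sum_constant s"
  define B where "B n k = ennreal (2 ^ k * (w n * min (gap l (Suc k)) (2 / 2 ^ n)))" for n k
  have C: "0 \<le> C" unfolding C_def by (rule dyadic_sum_constant_nonneg[OF s])
  have per_n: "ennreal (w n) * emeasure lborel (collar (1 / 2 ^ n))
      \<le> ennreal (w n * min 2 (2 / 2 ^ n)) + (\<Sum>k. B n k)" for n
    unfolding B_def by (rule weighted_emeasure_dyadic_collar_le) (simp add: w_def)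
  have A: "(\<Sum>n. ennreal (w n * min 2 (2 / 2 ^ n))) \<le> ennreal (C * 2 powr (1 - 2 * s))"
    unfolding w_def C_def by (rule suminf_dyadic_min_le[OF s]) simp
  have "(\<Sum>n. B n k) \<le> ennreal (C * (2 ^ k * gap l (Suc k) powr (1 - 2 * s)))" for k
  proof -
    have "(\<Sum>n. B n k) = ennreal (2 ^ k) * (\<Sum>n. ennreal (w n * min (gap l (Suc k)) (2 / 2 ^ n)))"
      by (simp add: B_def ennreal_mult' ennreal_suminf_cmult)
    also have "\<dots> \<le> ennreal (2 ^ k) * ennreal (C * gap l (Suc k) powr (1 - 2 * s))"
      unfolding w_def C_def by (intro mult_left_mono suminf_dyadic_min_le[OF s gap_Suc_pos]) simp
    also have "\<dots> = ennreal (C * (2 ^ k * gap l (Suc k) powr (1 - 2 * s)))"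
      by (simp add: mult.left_commute flip: ennreal_mult')
    finally show ?thesis .
  qed
  then have "(\<Sum>n. \<Sum>k. B n k) \<le> (\<Sum>k. ennreal (C * (2 ^ k * gap l (Suc k) powr (1 - 2 * s))))"
    unfolding suminf_ennreal_commute[of B] by (rule suminf_le) auto
  also have "\<dots> = ennreal (\<Sum>k. C * (2 ^ k * gap l (Suc k) powr (1 - 2 * s)))"
    using C gaps by (intro suminf_ennreal2) auto
  finally have B: "(\<Sum>n. \<Sum>k. B n k)
      \<le> ennreal (\<Sum>k. C * (2 ^ k * gap l (Suc k) powr (1 - 2 * s)))" .
  have "(\<Sum>n. ennreal (w n) * emeasure lborel (collar (1 / 2 ^ n)))
      \<le> (\<Sum>n. ennreal (w n * min 2 (2 / 2 ^ n)) + (\<Sum>k. B n k))"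
    by (intro suminf_le per_n) auto
  also have "\<dots> = (\<Sum>n. ennreal (w n * min 2 (2 / 2 ^ n))) + (\<Sum>n. \<Sum>k. B n k)"
    by (rule suminf_add[symmetric]) auto
  also have "\<dots> \<le> ennreal (C * 2 powr (1 - 2 * s))
      + ennreal (\<Sum>k. C * (2 ^ k * gap l (Suc k) powr (1 - 2 * s)))"
    by (rule add_mono[OF A B])
  also have "\<dots> < \<infinity>" by simp
  finally show ?thesis unfolding w_def .
qed

lemma in_sobolev_indicator_cantor_set:
  assumes s: "0 < s" "s < 1/2"
    and gaps: "summable (\<lambda>k. 2 ^ k * gap l (Suc k) powr (1 - 2 * s))"
  shows "in_sobolev s cantor_indicator"
proof -
  interpret unit_bounded_integrable cantor_indicator by (rule unit_bounded_integrable_indicator)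
  have "(\<integral>\<^sup>+\<xi>. ennreal ((1 + \<xi>\<^sup>2) powr s * (cmod (fourier cantor_indicator \<xi>))\<^sup>2) \<partial>lborel)
      = (\<integral>\<^sup>+\<xi>. ennreal ((1 + \<xi>\<^sup>2) powr s * power_spectrum cantor_indicator \<xi>) \<partial>lborel)"
    by (simp add: cmod_fourier_squared[OF g_integrable])
  also have "\<dots> \<le> 2 * ennreal (\<integral>x. (cantor_indicator x)\<^sup>2 \<partial>lborel)
      + (\<Sum>n. ennreal (9 * 2 powr (2 * s * real n))
              * (\<integral>\<^sup>+\<xi>. ennreal (power_spectrum (\<lambda>x. cantor_indicator x - cantor_indicator (x - 1 / 2 ^ n)) \<xi>) \<partial>lborel))"
    using s by (intro nn_integral_sobolev_weight_le) auto
  also have "\<dots> \<le> 2 * ennreal (\<integral>x. (cantor_indicator x)\<^sup>2 \<partial>lborel)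
      + (\<Sum>n. 18 * (ennreal (2 powr (2 * s * real n)) * emeasure lborel (collar (1 / 2 ^ n))))"
  proof (intro add_left_mono suminf_le)
    fix n :: nat
    have "ennreal (9 * 2 powr (2 * s * real n))
        * (\<integral>\<^sup>+\<xi>. ennreal (power_spectrum (\<lambda>x. cantor_indicator x - cantor_indicator (x - 1 / 2 ^ n)) \<xi>) \<partial>lborel)
        \<le> ennreal (9 * 2 powr (2 * s * real n)) * (2 * emeasure lborel (collar (1 / 2 ^ n)))"
      by (intro mult_left_mono nn_integral_power_spectrum_shift_diff_le) auto
    also have "\<dots> = 18 * (ennreal (2 powr (2 * s * real n)) * emeasure lborel (collar (1 / 2 ^ n)))"
      by (simp add: ennreal_mult' mult_ac)
    finally show "ennreal (9 * 2 powr (2 * s * real n))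
        * (\<integral>\<^sup>+\<xi>. ennreal (power_spectrum (\<lambda>x. cantor_indicator x - cantor_indicator (x - 1 / 2 ^ n)) \<xi>) \<partial>lborel)
        \<le> 18 * (ennreal (2 powr (2 * s * real n)) * emeasure lborel (collar (1 / 2 ^ n)))" .
  qed auto
  also have "\<dots> < \<infinity>"
    using suminf_dyadic_collar_finite[OF s gaps] by (simp add: ennreal_suminf_cmult ennreal_mult_less_top)
  finally show ?thesis unfolding in_sobolev_def using g_integrable by simp
qed

lemma summable_scaled_gaps: "summable (\<lambda>k. 2 ^ Suc k * gap l (Suc k))"
proof (rule summableI_nonneg_bounded)
  show "0 \<le> 2 ^ Suc k * gap l (Suc k)" for k using gap_Suc_pos[of k] by simp
  define u where "u k = 2 ^ k * l k" for k
  have "2 ^ Suc k * gap l (Suc k) = 2 * (u k - u (Suc k))" for k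
    unfolding u_def gap_Suc by (simp add: algebra_simps)
  then have "(\<Sum>k<n. 2 ^ Suc k * gap l (Suc k)) = 2 * (u 0 - u n)" for n
    by (simp only: sum_distrib_left[symmetric] sum_lessThan_telescope')
  also have "\<dots> n \<le> 2" for n
    using l_pos[of n] l_0 by (simp add: u_def)
  finally show "(\<Sum>k<n. 2 ^ Suc k * gap l (Suc k)) \<le> 2" for n .
qed

text \<open>Since the gaps decrease, the \<open>j\<close>-th term of the series in the hypothesis dominates
  \<open>Gap\<^sub>j\<^sub>+\<^sub>1\<^sup>2\<^sup>-\<^sup>2\<^sup>s / Gap\<^sub>j\<^sub>+\<^sub>2 \<cdot> 2\<^sup>j\<^sup>+\<^sup>2\<close>, keeping only the first term of the inner sum.\<close>

lemma summable_gap_powr: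
  assumes gaps_decreasing: "\<forall>j\<ge>2. gap l j < gap l (j - 1)"
    and summable: "summable (\<lambda>j. gap l (j + 1) powr (2 - 2 * s) / (gap l (j + 2))\<^sup>2
                                 * (\<Sum>k. 2 ^ (k + j + 2) * gap l (k + j + 2)))"
  shows "summable (\<lambda>k. 2 ^ k * gap l (Suc k) powr (1 - 2 * s))"
proof -
  have g1: "0 < gap l (j + 1)" and g2: "0 < gap l (j + 2)" and g21: "gap l (j + 2) < gap l (j + 1)"
    for j
    using gap_Suc_pos[of j] gap_Suc_pos[of "Suc j"] gaps_decreasing[rule_format, of "j + 2"]
    by (simp_all add: numeral_2_eq_2)
  have inner: "2 ^ (j + 2) * gap l (j + 2) \<le> (\<Sum>k. 2 ^ (k + j + 2) * gap l (k + j + 2))" for j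
  proof -
    have "summable (\<lambda>k. 2 ^ Suc (k + Suc j) * gap l (Suc (k + Suc j)))"
      using summable_scaled_gaps by (subst summable_iff_shift)
    then have "summable (\<lambda>k. 2 ^ (k + j + 2) * gap l (k + j + 2))"
      by (simp add: numeral_2_eq_2 add.assoc)
    from sum_le_suminf[OF this, of "{0}"] show ?thesis
      using g2 by (fastforce simp: numeral_2_eq_2 add.assoc intro: less_imp_le)
  qed
  have dominated: "2 ^ (j + 2) * gap l (j + 1) powr (1 - 2 * s)
      \<le> gap l (j + 1) powr (2 - 2 * s) / (gap l (j + 2))\<^sup>2 * (\<Sum>k. 2 ^ (k + j + 2) * gap l (k + j + 2))"
    for j
  proof -
    have "gap l (j + 1) powr (2 - 2 * s) = gap l (j + 1) powr ((1 - 2 * s) + 1)" by simp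
    also have "\<dots> = gap l (j + 1) powr (1 - 2 * s) * gap l (j + 1) powr 1" by (rule powr_add)
    finally have "gap l (j + 1) powr (1 - 2 * s) = gap l (j + 1) powr (2 - 2 * s) / gap l (j + 1)"
      using g1[of j] by simp
    also have "\<dots> \<le> gap l (j + 1) powr (2 - 2 * s) / gap l (j + 2)"
      using g1[of j] g2[of j] g21[of j] by (intro divide_left_mono) auto
    finally have "2 ^ (j + 2) * gap l (j + 1) powr (1 - 2 * s)
        \<le> gap l (j + 1) powr (2 - 2 * s) / (gap l (j + 2))\<^sup>2 * (2 ^ (j + 2) * gap l (j + 2))"
      using g2[of j] by (simp add: power2_eq_square field_simps)
    also have "\<dots> \<le> gap l (j + 1) powr (2 - 2 * s) / (gap l (j + 2))\<^sup>2
        * (\<Sum>k. 2 ^ (k + j + 2) * gap l (k + j + 2))"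
      by (intro mult_left_mono inner) simp
    finally show ?thesis .
  qed
  have "summable (\<lambda>j. 2 ^ (j + 2) * gap l (j + 1) powr (1 - 2 * s))"
    by (rule summable_comparison_test'[OF summable]) (use dominated in \<open>simp add: abs_mult\<close>)
  then have "summable (\<lambda>j. 2 ^ (j + 2) * gap l (j + 1) powr (1 - 2 * s) / 4)"
    by (rule summable_divide)
  then show ?thesis by (simp add: power_add)
qed

lemma less_half_if_summable_gap_powr:
  assumes "summable (\<lambda>k. 2 ^ k * gap l (Suc k) powr (1 - 2 * s))"
  shows "s < 1/2"
proof (rule ccontr)
  assume "\<not> s < 1/2"
  have "1 \<le> 2 ^ k * gap l (Suc k) powr (1 - 2 * s)" for k
  proof -
    have "gap l (Suc k) powr 0 \<le> gap l (Suc k) powr (1 - 2 * s)"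
      by (rule powr_mono'[OF _ less_imp_le[OF gap_Suc_pos] less_imp_le[OF gap_Suc_less_1]])
         (use \<open>\<not> s < 1/2\<close> in simp)
    then have "1 * 1 \<le> 2 ^ k * gap l (Suc k) powr (1 - 2 * s)"
      using gap_Suc_pos[of k] by (intro mult_mono) simp_all
    then show ?thesis by simp
  qed
  moreover have "eventually (\<lambda>k. 2 ^ k * gap l (Suc k) powr (1 - 2 * s) < 1) sequentially"
    by (rule order_tendstoD(2)[OF summable_LIMSEQ_zero[OF assms]]) simp
  ultimately show False by (auto simp: eventually_sequentially not_less[symmetric])
qed

end

section \<open>Fat Cantor sets\<close>

lemma fat_l_scaled: "2 ^ j * fat_l \<alpha> \<beta> j = 1 - \<beta> * (\<Sum>i<j. (2 * \<alpha>) ^ i)"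
proof (induction j)
  case (Suc j)
  have "2 ^ Suc j * fat_l \<alpha> \<beta> (Suc j) = 2 ^ j * fat_l \<alpha> \<beta> j - \<beta> * (2 * \<alpha>) ^ j"
    by (simp add: power_mult_distrib field_simps)
  also have "\<dots> = 1 - \<beta> * (\<Sum>i<Suc j. (2 * \<alpha>) ^ i)" using Suc by (simp add: algebra_simps)
  finally show ?case .
qed simp

lemma fat_l_pos:
  assumes \<alpha>: "0 < \<alpha>" "\<alpha> < 1 / 2" and \<beta>: "0 < \<beta>" "\<beta> < 1 - 2 * \<alpha>"
  shows "0 < fat_l \<alpha> \<beta> j"
proof -
  have "(\<Sum>i<j. (2 * \<alpha>) ^ i) = (1 - (2 * \<alpha>) ^ j) / (1 - 2 * \<alpha>)"
    using sum_gp_strict[of "2 * \<alpha>" j] \<alpha> by simp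
  also have "\<dots> \<le> 1 / (1 - 2 * \<alpha>)"
    using \<alpha> by (intro divide_right_mono) auto
  finally have "\<beta> * (\<Sum>i<j. (2 * \<alpha>) ^ i) \<le> \<beta> * (1 / (1 - 2 * \<alpha>))"
    using \<beta> by (intro mult_left_mono) auto
  also have "\<dots> < 1" using \<alpha> \<beta> by (simp add: field_simps)
  finally have "0 < 2 ^ j * fat_l \<alpha> \<beta> j" unfolding fat_l_scaled by simp
  then show ?thesis by (simp add: zero_less_mult_iff)
qed

lemma cantor_sequence_fat_l:
  assumes \<alpha>: "0 < \<alpha>" "\<alpha> < 1 / 2" and \<beta>: "0 < \<beta>" "\<beta> < 1 - 2 * \<alpha>"
  shows "cantor_sequence (fat_l \<alpha> \<beta>)"
proof
  fix j
  have "0 < \<beta> * \<alpha> ^ j" using \<alpha> \<beta> by simp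
  then show "0 < fat_l \<alpha> \<beta> (Suc j) \<and> fat_l \<alpha> \<beta> (Suc j) < fat_l \<alpha> \<beta> j / 2"
    using fat_l_pos[OF \<alpha> \<beta>, of "Suc j"] by simp
qed simp

lemma gap_fat_l: "gap (fat_l \<alpha> \<beta>) (Suc k) = \<beta> * \<alpha> ^ k"
  by (simp add: gap_def field_simps)

lemma s_alpha2_bounds:
  assumes "0 < \<alpha>" "\<alpha> < 1 / 2"
  shows "0 < s_alpha2 \<alpha>" "s_alpha2 \<alpha> < 1 / 2"
proof -
  have "ln \<alpha> < - ln 2" using assms ln_less_cancel_iff[of \<alpha> "1/2"] by (simp add: ln_div)
  moreover have "0 < ln (2::real)" by simp
  ultimately have "ln \<alpha> < 0" by linarith
  with \<open>ln \<alpha> < - ln 2\<close> have "-1 < ln 2 / ln \<alpha>" "ln 2 / ln \<alpha> < 0"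
    by (simp_all add: field_simps divide_pos_neg)
  then show "0 < s_alpha2 \<alpha>" "s_alpha2 \<alpha> < 1 / 2" unfolding s_alpha2_def by (simp_all add: field_simps)
qed

text \<open>Here \<open>2\<^sup>k Gap\<^sub>k\<^sub>+\<^sub>1\<^sup>1\<^sup>-\<^sup>2\<^sup>s = \<beta>\<^sup>1\<^sup>-\<^sup>2\<^sup>s (2\<alpha>\<^sup>1\<^sup>-\<^sup>2\<^sup>s)\<^sup>k\<close>, and \<open>2\<alpha>\<^sup>1\<^sup>-\<^sup>2\<^sup>s < 1\<close> is equivalent to
  \<open>s < s\<^sub>\<alpha>\<^sub>,\<^sub>2\<close> since \<open>ln \<alpha> < 0\<close>.\<close>

lemma summable_fat_gap_powr:
  assumes \<alpha>: "0 < \<alpha>" "\<alpha> < 1 / 2" and \<beta>: "0 < \<beta>" and s: "s < s_alpha2 \<alpha>"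
  shows "summable (\<lambda>k. 2 ^ k * gap (fat_l \<alpha> \<beta>) (Suc k) powr (1 - 2 * s))"
proof -
  define r where "r = 2 * \<alpha> powr (1 - 2 * s)"
  have ln\<alpha>: "ln \<alpha> < 0" using \<alpha> by simp
  have "- ln 2 / ln \<alpha> < 1 - 2 * s" using s unfolding s_alpha2_def by (simp add: field_simps)
  from mult_strict_right_mono_neg[OF this ln\<alpha>] have "(1 - 2 * s) * ln \<alpha> < - ln 2"
    using ln\<alpha> by simp
  then have "\<alpha> powr (1 - 2 * s) < exp (- ln 2)" using \<alpha> by (simp add: powr_def)
  then have r: "0 \<le> r" "r < 1" unfolding r_def by (simp_all add: exp_minus)
  have "2 ^ k * gap (fat_l \<alpha> \<beta>) (Suc k) powr (1 - 2 * s) = \<beta> powr (1 - 2 * s) * r ^ k" for k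
  proof -
    have "(\<alpha> ^ k) powr (1 - 2 * s) = (\<alpha> powr (1 - 2 * s)) ^ k"
      using \<alpha> by (simp add: powr_power powr_powr mult.commute flip: powr_realpow)
    then show ?thesis
      using \<alpha> \<beta> unfolding gap_fat_l r_def by (simp add: powr_mult power_mult_distrib)
  qed
  moreover have "summable (\<lambda>k. \<beta> powr (1 - 2 * s) * r ^ k)"
    using r by (intro summable_mult summable_geometric) simp
  ultimately show ?thesis by simp
qed

lemma (in cantor_sequence) in_sobolev_indicator_cantor_set_if_gap_condition:
  assumes "\<forall>j\<ge>2. gap l j < gap l (j - 1)" and "0 < s"
    and "summable (\<lambda>j. gap l (j + 1) powr (2 - 2 * s) / (gap l (j + 2))\<^sup>2
                          * (\<Sum>k. 2 ^ (k + j + 2) * gap l (k + j + 2)))"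
  shows "in_sobolev s cantor_indicator"
proof -
  have "summable (\<lambda>k. 2 ^ k * gap l (Suc k) powr (1 - 2 * s))"
    using summable_gap_powr assms(1,3) by blast
  then show ?thesis
    using in_sobolev_indicator_cantor_set assms(2) less_half_if_summable_gap_powr by blast
qed

lemma in_sobolev_indicator_fat_cantor_set:
  assumes \<alpha>: "0 < \<alpha>" "\<alpha> < 1 / 2" and \<beta>: "0 < \<beta>" "\<beta> < 1 - 2 * \<alpha>" and s: "s < s_alpha2 \<alpha>"
  shows "in_sobolev s (indicator (cantor_set (fat_l \<alpha> \<beta>)))"
proof -
  interpret cantor_sequence "fat_l \<alpha> \<beta>" by (rule cantor_sequence_fat_l[OF \<alpha> \<beta>])
  define t where "t = max s (s_alpha2 \<alpha> / 2)"
  have t: "0 < t" "t < 1 / 2" "t < s_alpha2 \<alpha>"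
    using s_alpha2_bounds[OF \<alpha>] s unfolding t_def by auto
  have "in_sobolev t cantor_indicator"
    using in_sobolev_indicator_cantor_set[OF t(1,2) summable_fat_gap_powr[OF \<alpha> \<beta>(1) t(3)]] .
  then show ?thesis by (rule in_sobolev_mono) (simp add: t_def)
qed

theorem proposition4p10:
  shows "(\<forall>(l::nat \<Rightarrow> real) (s::real).
            l 0 = 1 \<and> (\<forall>j. 0 < l (Suc j) \<and> l (Suc j) < l j / 2)
          \<and> (\<forall>j\<ge>1. gap l j < l j) \<and> (\<forall>j\<ge>2. gap l j < gap l (j - 1))
          \<and> s > 0
          \<and> summable (\<lambda>j. gap l (j + 1) powr (2 - 2 * s) / (gap l (j + 2))\<^sup>2
                          * (\<Sum>k. 2 ^ (k + j + 2) * gap l (k + j + 2)))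
          \<longrightarrow> in_sobolev s (indicator (cantor_set l)))
       \<and> (\<forall>(\<alpha>::real) (\<beta>::real) (s::real).
            0 < \<alpha> \<and> \<alpha> < 1 / 2 \<and> 0 < \<beta> \<and> \<beta> < 1 - 2 * \<alpha>
          \<longrightarrow> 0 < s_alpha2 \<alpha> \<and> s_alpha2 \<alpha> < 1 / 2
            \<and> (s < s_alpha2 \<alpha> \<longrightarrow> in_sobolev s (indicator (cantor_set (fat_l \<alpha> \<beta>)))))"
proof (intro conjI allI impI)
  fix l :: "nat \<Rightarrow> real" and s :: real
  assume H: "l 0 = 1 \<and> (\<forall>j. 0 < l (Suc j) \<and> l (Suc j) < l j / 2)
          \<and> (\<forall>j\<ge>1. gap l j < l j) \<and> (\<forall>j\<ge>2. gap l j < gap l (j - 1))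
          \<and> s > 0
          \<and> summable (\<lambda>j. gap l (j + 1) powr (2 - 2 * s) / (gap l (j + 2))\<^sup>2
                          * (\<Sum>k. 2 ^ (k + j + 2) * gap l (k + j + 2)))"
  then interpret cantor_sequence l by unfold_locales auto
  show "in_sobolev s (indicator (cantor_set l))"
    using H by (intro in_sobolev_indicator_cantor_set_if_gap_condition) auto
next
  fix \<alpha> \<beta> s :: real
  assume "0 < \<alpha> \<and> \<alpha> < 1 / 2 \<and> 0 < \<beta> \<and> \<beta> < 1 - 2 * \<alpha>"
  then have \<alpha>: "0 < \<alpha>" "\<alpha> < 1 / 2" and \<beta>: "0 < \<beta>" "\<beta> < 1 - 2 * \<alpha>" by auto
  show "0 < s_alpha2 \<alpha>" "s_alpha2 \<alpha> < 1 / 2" by (rule s_alpha2_bounds[OF \<alpha>])+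
  show "s < s_alpha2 \<alpha> \<Longrightarrow> in_sobolev s (indicator (cantor_set (fat_l \<alpha> \<beta>)))"
    by (rule in_sobolev_indicator_fat_cantor_set[OF \<alpha> \<beta>])
qed

end
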